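(* Let $A$ be a Lagrange tensor along the geodesic $c:[t_0,t_1]\to M$ with base point $t_0$, and assume $R_t\ge0$ for all $t$ (e.g. $\sec_M\ge0$). Suppose there exists a nonzero $v\in E_{t_0}$ such that (a) $v$ is orthogonal to $\ker A_t$ for all $t\in[t_0,t_1]$ (so that $g_v$ is smooth on $[t_0,t_1]$), and (b) $g_v'(t_0)=g_v'(t_1)=0$. Then $w=A_t^{-1}A_t^{-*}v\in E_{t_0}$ is independent of the regular point $t$, $A_t'w=0$ for all $t\in[t_0,t_1]$, and $A_t^{-*}v=A_tw$ is a parallel Jacobi field along $c$.
   Context: $(M^{n+1},g)$ Riemannian, $c$ a unit-speed geodesic, $E_t=\dot c(t)^\perp$, $R_t(x)=R(x,\dot c)\dot c$ on $E_t$, $'=\nabla_{\dot c}$. A Lagrange tensor with base point $t_0$ is a smooth family of linear maps $A_t:E_{t_0}\to E_t$ with $A_t''+R_tA_t=0$, $\ker A_{t_0}\cap\ker A'_{t_0}=0$, and $\langle A_t'v,A_tw\rangle=\langle A_tv,A_t'w\rangle$ for all $t$, $v,w$. Regular points: $A_t$ invertible. $A_t^{-*}=(A_t^* )^{-1}$ with $A_t^*$ the adjoint. $g_v(t)=\|v\|^2/\|A_t^{-*}v\|$ at regular $t$, extended continuously; it is smooth wherever $v\perp\ker A_t$. *)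

theory Defs
  imports "HOL-Analysis.Analysis"
begin

text \<open>Everything is expressed in a parallel orthonormal frame along the geodesic c:
  E_t is identified with real^'n (n = dim M - 1), the covariant derivative along c
  becomes the ordinary derivative, R_t becomes a matrix-valued function.\<close>

definition deriv_tower_on :: "real set \<Rightarrow> (nat \<Rightarrow> real \<Rightarrow> 'a::real_normed_vector) \<Rightarrow> bool" where
  "deriv_tower_on S D \<longleftrightarrow>
     (\<forall>k. \<forall>t\<in>S. (D k has_vector_derivative D (Suc k) t) (at t within S))"

definition smooth_on_real :: "real set \<Rightarrow> (real \<Rightarrow> 'a::real_normed_vector) \<Rightarrow> bool" where
  "smooth_on_real S f \<longleftrightarrow> (\<exists>D. D 0 = f \<and> deriv_tower_on S D)"

text \<open>Lagrange tensor on [t0,t1] with base point t0, given with its tower of derivatives DA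
  (DA 0 = A, DA 1 = A', DA 2 = A'').\<close>
definition lagrange_tensor ::
  "real \<Rightarrow> real \<Rightarrow> (real \<Rightarrow> real^'n^'n) \<Rightarrow> (nat \<Rightarrow> real \<Rightarrow> real^'n^'n) \<Rightarrow> bool" where
  "lagrange_tensor t0 t1 R DA \<longleftrightarrow>
     deriv_tower_on {t0..t1} DA \<and>
     (\<forall>t\<in>{t0..t1}. DA 2 t + R t ** DA 0 t = 0) \<and>
     (\<forall>x. DA 0 t0 *v x = 0 \<and> DA 1 t0 *v x = 0 \<longrightarrow> x = 0) \<and>
     (\<forall>t\<in>{t0..t1}. \<forall>x y. (DA 1 t *v x) \<bullet> (DA 0 t *v y) = (DA 0 t *v x) \<bullet> (DA 1 t *v y))"

definition inv_adj :: "real^'n^'n \<Rightarrow> real^'n^'n" where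
  "inv_adj M = matrix_inv (transpose M)"

end

theory Submission
  imports Defs
begin

(* For v orthogonal to every ker A_t consider the dual energy
     h(t) = max_x (2 <v,x> - |A_t x|^2) = |A_t x_t|^2,   where A_t^T A_t x_t = v,
   which equals |A_t^{-*} v|^2 at regular points, so that g_v = |v|^2 / sqrt h.
   1. h is continuous and positive; singular instants are isolated.  Both facts rest on the
      Lagrange structure: ker A_s^T = A'_s (ker A_s), and A_s k = A'_s k = 0 forces k = 0.
   2. h is convex: it lies above the test functions r |-> 2 <v, y r> - |A_r (y r)|^2 along
      suitable affine curves y, which touch h at s with nonnegative second derivative
      6 |A'_s x_s|^2 + 2 <A_s x_s, R_s A_s x_s>.
   3. g_v'(t0) = g_v'(t1) = 0 makes h flat at both ends, so h is constant.  Then each test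
      function has a maximum at s, forcing A'_s x_s = 0, and a Gronwall argument produces
      one w with A_t^T A_t w = v and A'_t w = 0 for all t; the claims follow. *)

lemma gronwall_vanishing:
  fixes e e' :: "real \<Rightarrow> real"
  assumes cont: "continuous_on {a..b} e"
    and e_deriv: "\<And>r. a < r \<Longrightarrow> r < b \<Longrightarrow> (e has_real_derivative e' r) (at r)"
    and bound: "\<And>r. a < r \<Longrightarrow> r < b \<Longrightarrow> \<bar>e' r\<bar> \<le> C * e r"
    and nonneg: "\<And>r. a \<le> r \<Longrightarrow> r \<le> b \<Longrightarrow> 0 \<le> e r"
    and s: "a \<le> s" "s \<le> b" and es: "e s = 0"
    and r: "a \<le> r" "r \<le> b"
  shows "e r = 0"
proof (cases "s \<le> r")
  case True
  let ?h = "\<lambda>x. e x * exp (- C * x)"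
  have "?h r \<le> ?h s"
  proof (rule DERIV_nonpos_imp_decreasing_open[OF True])
    fix x assume x: "s < x" "x < r"
    have "(?h has_real_derivative (e' x - C * e x) * exp (- C * x)) (at x)"
      using x s r by (auto intro!: derivative_eq_intros e_deriv simp: algebra_simps)
    moreover have "(e' x - C * e x) * exp (- C * x) \<le> 0"
      using bound[of x] x s r by (intro mult_nonpos_nonneg) auto
    ultimately show "\<exists>y. DERIV ?h x :> y \<and> y \<le> 0" by blast
  qed (use s r in \<open>auto intro!: continuous_intros continuous_on_subset[OF cont]\<close>)
  then show ?thesis using es nonneg[OF r] by (simp add: mult_le_0_iff)
next
  case False
  let ?h = "\<lambda>x. e x * exp (C * x)"
  have "?h r \<le> ?h s"
  proof (rule DERIV_nonneg_imp_increasing_open[of r s])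
    fix x assume x: "r < x" "x < s"
    have "(?h has_real_derivative (e' x + C * e x) * exp (C * x)) (at x)"
      using x s r by (auto intro!: derivative_eq_intros e_deriv simp: algebra_simps)
    moreover have "(e' x + C * e x) * exp (C * x) \<ge> 0"
      using bound[of x] x s r by (intro mult_nonneg_nonneg) auto
    ultimately show "\<exists>y. DERIV ?h x :> y \<and> y \<ge> 0" by blast
  qed (use False s r in \<open>auto intro!: continuous_intros continuous_on_subset[OF cont]\<close>)
  then show ?thesis using es nonneg[OF r] by (simp add: mult_le_0_iff)
qed

lemma taylor_lower_bound:
  fixes f f1 f2 :: "real \<Rightarrow> real"
  assumes s: "a < s" "s < b"
    and d1: "\<And>x. a < x \<Longrightarrow> x < b \<Longrightarrow> (f has_real_derivative f1 x) (at x)"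
    and d2: "\<And>x. a < x \<Longrightarrow> x < b \<Longrightarrow> (f1 has_real_derivative f2 x) (at x)"
    and c2: "isCont f2 s" and ep: "\<epsilon> > 0"
  shows "\<exists>\<delta>>0. \<forall>x. \<bar>x - s\<bar> < \<delta> \<longrightarrow> f s + f1 s * (x - s) + (f2 s / 2 - \<epsilon>) * (x - s)^2 \<le> f x"
proof -
  obtain d0 where d0: "d0 > 0" "\<And>y. dist y s < d0 \<Longrightarrow> dist (f2 y) (f2 s) < 2 * \<epsilon>"
    using c2 ep unfolding continuous_at_eps_delta by (metis mult_pos_pos zero_less_numeral)
  define \<delta> where "\<delta> = min d0 (min (s - a) (b - s))"
  define D where "D m = (if m = 0 then f else if m = 1 then f1 else f2)" for m :: nat
  have "f s + f1 s * (x - s) + (f2 s / 2 - \<epsilon>) * (x - s)^2 \<le> f x" if x: "\<bar>x - s\<bar> < \<delta>" for x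
  proof (cases "x = s")
    case False
    have "\<forall>m t. m < 2 \<and> min x s \<le> t \<and> t \<le> max x s \<longrightarrow> (D m has_real_derivative D (Suc m) t) (at t)"
      using x d1 d2 by (auto simp: D_def \<delta>_def less_2_cases_iff)
    then obtain t where t: "\<bar>t - s\<bar> < \<delta>"
      and fx: "f x = (\<Sum>m<2. D m s / fact m * (x - s) ^ m) + D 2 t / fact 2 * (x - s) ^ 2"
      using Taylor[of 2 D f "min x s" "max x s" s x] False x
      by (auto simp: D_def split: if_splits) (smt (verit))+
    have "f2 s - 2 * \<epsilon> \<le> f2 t" using d0(2)[of t] t by (auto simp: \<delta>_def dist_real_def)
    then have "(f2 s / 2 - \<epsilon>) * (x - s)^2 \<le> f2 t / 2 * (x - s)^2"
      by (intro mult_right_mono) auto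
    then show ?thesis using fx by (simp add: D_def eval_nat_numeral)
  qed simp
  moreover have "\<delta> > 0" using d0 s by (simp add: \<delta>_def)
  ultimately show ?thesis by blast
qed

(* At every interior point s, H lies above parabolas through (s, H s) of arbitrarily small
   negative curvature: a weak (viscosity) form of H'' >= 0. *)
definition supported_below :: "real \<Rightarrow> real \<Rightarrow> (real \<Rightarrow> real) \<Rightarrow> bool" where
  "supported_below a b H \<longleftrightarrow> (\<forall>s. a < s \<and> s < b \<longrightarrow> (\<exists>c. \<forall>\<epsilon>>0. \<exists>\<delta>>0. \<forall>r. a \<le> r \<and> r \<le> b \<and> \<bar>r - s\<bar> < \<delta>
      \<longrightarrow> H s + c * (r - s) - \<epsilon> * (r - s)^2 \<le> H r))"

(* Such a function cannot rise above a chord: otherwise the difference with the chord plus a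
   small convex parabola would have an interior maximum violating the support property. *)
lemma supported_below_chord:
  fixes H :: "real \<Rightarrow> real"
  assumes cont: "continuous_on {a..b} H" and sup: "supported_below a b H"
    and pmq: "a \<le> p" "p < m" "m < q" "q \<le> b"
  shows "H m \<le> H p + (H q - H p) * (m - p) / (q - p)"
proof (rule ccontr)
  assume above: "\<not> ?thesis"
  define sl where "sl = (H q - H p) / (q - p)"
  define L where "L r = H p + sl * (r - p)" for r
  define d where "d = H m - L m"
  have d: "d > 0" using above by (simp add: d_def L_def sl_def)
  have mpq: "(m - p) * (q - m) > 0" using pmq by simp
  define \<eta> where "\<eta> = d / (2 * ((m - p) * (q - m)))"
  have eta: "\<eta> > 0" using d mpq by (simp add: \<eta>_def)
  define G where "G r = H r - L r + \<eta> * ((r - p) * (r - q))" for r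
  have Gp: "G p = 0" and Gq: "G q = 0" using pmq by (simp_all add: G_def L_def sl_def)
  have Gm: "G m = d / 2" using mpq by (simp add: G_def d_def \<eta>_def field_simps)
  have "continuous_on {p..q} G"
    unfolding G_def L_def using pmq by (intro continuous_intros continuous_on_subset[OF cont]) auto
  then obtain c where c: "c \<in> {p..q}" and cmax: "\<And>y. y \<in> {p..q} \<Longrightarrow> G y \<le> G c"
    using continuous_attains_sup[OF compact_Icc] pmq by (metis atLeastAtMost_iff empty_iff less_le_not_le order.trans)
  have "G c > 0" using cmax[of m] Gm d pmq by simp
  then have pc: "p < c" "c < q" using c Gp Gq by (auto simp: less_le)
  then obtain k where "\<forall>\<epsilon>>0. \<exists>\<delta>>0. \<forall>r. a \<le> r \<and> r \<le> b \<and> \<bar>r - c\<bar> < \<delta> \<longrightarrow> H c + k * (r - c) - \<epsilon> * (r - c)^2 \<le> H r"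
    using sup pmq unfolding supported_below_def by force
  then obtain \<delta> where \<delta>: "\<delta> > 0"
    and supp: "\<And>r. a \<le> r \<Longrightarrow> r \<le> b \<Longrightarrow> \<bar>r - c\<bar> < \<delta> \<Longrightarrow> H c + k * (r - c) - (\<eta>/2) * (r - c)^2 \<le> H r"
    using eta by (metis half_gt_zero)
  define h where "h = min (\<delta>/2) (min ((c - p)/2) ((q - c)/2))"
  have h: "h > 0" "h < \<delta>" "p < c - h" "c + h < q" using \<delta> pc by (auto simp: h_def min_def field_simps)
  have "H c + k * h - (\<eta>/2) * h^2 \<le> H (c + h)" "H c - k * h - (\<eta>/2) * h^2 \<le> H (c - h)"
    using supp[of "c + h"] supp[of "c - h"] h pmq by (simp_all add: power2_eq_square)
  moreover have "L (c + h) + L (c - h) = 2 * L c" by (simp add: L_def algebra_simps)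
  then have "G (c + h) + G (c - h) - 2 * G c = H (c + h) + H (c - h) - 2 * H c + 2 * \<eta> * h^2"
    unfolding G_def by (simp add: algebra_simps power2_eq_square)
  ultimately have "G (c + h) + G (c - h) - 2 * G c \<ge> \<eta> * h^2" by simp
  moreover have "G (c + h) \<le> G c" "G (c - h) \<le> G c" using cmax h by simp_all
  ultimately show False using eta h by (smt (verit) mult_pos_pos zero_less_power)
qed

lemma supported_below_convex:
  fixes H :: "real \<Rightarrow> real"
  assumes "continuous_on {a..b} H" and "supported_below a b H"
  shows "convex_on {a..b} H"
proof (rule convex_on_linorderI)
  fix t x y :: real
  assume t: "0 < t" "t < 1" and xy: "x \<in> {a..b}" "y \<in> {a..b}" "x < y"
  let ?m = "(1 - t) *\<^sub>R x + t *\<^sub>R y"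
  have "x < ?m"
  proof -
    have "0 < t * (y - x)" using t xy by simp
    then show ?thesis by (simp add: algebra_simps)
  qed
  moreover have "?m < y"
  proof -
    have "0 < (1 - t) * (y - x)" using t xy by simp
    then show ?thesis by (simp add: algebra_simps)
  qed
  ultimately have "H ?m \<le> H x + (H y - H x) * (?m - x) / (y - x)"
    using xy by (intro supported_below_chord[OF assms]) auto
  moreover have "(H y - H x) * (?m - x) / (y - x) = t * H y - t * H x"
    using xy by (simp add: field_simps)
  moreover have "(1 - t) * H x = H x - t * H x" by (simp add: algebra_simps)
  ultimately show "H ?m \<le> (1 - t) * H x + t * H y" by linarith
qed simp

(* A convex function on [a,b] whose one-sided derivatives vanish at both ends is constant:
   the slopes from either endpoint are monotone and tend to 0. *)
lemma convex_flat_endpoints_const: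
  fixes H :: "real \<Rightarrow> real"
  assumes ab: "a < b" and conv: "convex_on {a..b} H"
    and da: "(H has_real_derivative 0) (at a within {a..b})"
    and db: "(H has_real_derivative 0) (at b within {a..b})"
    and r: "r \<in> {a..b}"
  shows "H r = H a"
proof -
  have slope_swap: "(u - w) / (p - q) = (w - u) / (q - p)" for u w p q :: real
    by (metis minus_diff_eq minus_divide_divide)
  have ge_a: "H a \<le> H x" if x: "a < x" "x \<le> b" for x
  proof -
    have "((\<lambda>y. (H y - H a) / (y - a)) \<longlongrightarrow> 0) (at_right a)"
      using da ab by (simp add: has_field_derivative_iff at_within_Icc_at_right)
    moreover have "\<forall>\<^sub>F y in at_right a. (H y - H a) / (y - a) \<le> (H x - H a) / (x - a)"
      using eventually_at_right_real[OF x(1)]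
    proof eventually_elim
      case (elim y)
      then have "(H a - H y) / (a - y) \<le> (H a - H x) / (a - x)"
        using x ab by (intro convex_on_slope_le(1)[OF conv]) auto
      then show ?case by (simp only: slope_swap[of "H a"])
    qed
    ultimately have "0 \<le> (H x - H a) / (x - a)"
      by (rule tendsto_upperbound) (simp add: trivial_limit_at_right_real)
    then show ?thesis using x by (simp add: zero_le_divide_iff)
  qed
  have ge_b: "H b \<le> H x" if x: "a \<le> x" "x < b" for x
  proof -
    have "((\<lambda>y. (H y - H b) / (y - b)) \<longlongrightarrow> 0) (at_left b)"
      using db ab by (simp add: has_field_derivative_iff at_within_Icc_at_left)
    moreover have "\<forall>\<^sub>F y in at_left b. (H x - H b) / (x - b) \<le> (H y - H b) / (y - b)"
      using eventually_at_left_real[OF x(2)]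
    proof eventually_elim
      case (elim y)
      then show ?case using x ab by (intro convex_on_slope_le(2)[OF conv]) auto
    qed
    ultimately have "(H x - H b) / (x - b) \<le> 0"
      by (rule tendsto_lowerbound) (simp add: trivial_limit_at_left_real)
    then show ?thesis using x by (simp add: divide_le_0_iff)
  qed
  have "H b = H a" using ge_a[of b] ge_b[of a] ab by simp
  moreover have "H r \<le> H a"
    using convex_onD_Icc'[OF conv r] \<open>H b = H a\<close> by simp
  ultimately show ?thesis using ge_a[of r] ge_b[of r] r by (cases "r = a") auto
qed

lemma has_real_derivative_inner:
  assumes "(f has_vector_derivative f') (at x within s)" "(g has_vector_derivative g') (at x within s)"
  shows "((\<lambda>x. f x \<bullet> g x) has_real_derivative (f x \<bullet> g' + f' \<bullet> g x)) (at x within s)"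
  using bounded_bilinear.has_vector_derivative[OF bounded_bilinear_inner assms]
  by (simp add: has_real_derivative_iff_has_vector_derivative)

lemma has_vector_derivative_quotient:
  fixes f :: "real \<Rightarrow> 'a::real_normed_vector"
  assumes "(f has_vector_derivative f') (at x within s)"
  shows "((\<lambda>y. (1 / (y - x)) *\<^sub>R (f y - f x)) \<longlongrightarrow> f') (at x within s)"
proof -
  have "((\<lambda>y. (1 / norm (y - x)) *\<^sub>R (f y - (f x + (y - x) *\<^sub>R f'))) \<longlongrightarrow> 0) (at x within s)"
    using assms unfolding has_vector_derivative_def has_derivative_within by simp
  then have lim: "((\<lambda>y. norm ((1 / norm (y - x)) *\<^sub>R (f y - (f x + (y - x) *\<^sub>R f')))) \<longlongrightarrow> 0) (at x within s)"
    by (rule tendsto_norm_zero)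
  have quotient_eq: "norm ((1 / norm (y - x)) *\<^sub>R (f y - (f x + (y - x) *\<^sub>R f'))) = norm ((1 / (y - x)) *\<^sub>R (f y - f x) - f')"
    if "y \<noteq> x" for y
  proof -
    have "(1 / (y - x)) *\<^sub>R (f y - f x) - f' = (1 / (y - x)) *\<^sub>R (f y - (f x + (y - x) *\<^sub>R f'))"
      using that by (simp add: scaleR_diff_right scaleR_add_right)
    then show ?thesis by (simp add: real_norm_def)
  qed
  have "\<forall>\<^sub>F y in at x within s. norm ((1 / norm (y - x)) *\<^sub>R (f y - (f x + (y - x) *\<^sub>R f')))
      = norm ((1 / (y - x)) *\<^sub>R (f y - f x) - f')"
    unfolding eventually_at_filter by (rule always_eventually) (blast intro: quotient_eq)
  from Lim_transform_eventually[OF lim this] show ?thesis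
    by (simp add: tendsto_norm_zero_iff LIM_zero_iff)
qed

lemma sequence_approaching:
  fixes s :: real
  assumes "\<And>\<delta>. \<delta> > 0 \<Longrightarrow> \<exists>r. P r \<and> \<bar>r - s\<bar> < \<delta>"
  shows "\<exists>X. (\<forall>n. P (X n)) \<and> X \<longlonglongrightarrow> s"
proof -
  have "\<forall>n. \<exists>r. P r \<and> \<bar>r - s\<bar> < inverse (real (Suc n))"
    using assms by simp
  then obtain X where X: "\<And>n. P (X n) \<and> \<bar>X n - s\<bar> < inverse (real (Suc n))" by metis
  have "(\<lambda>n. X n - s) \<longlonglongrightarrow> 0"
    by (rule Lim_null_comparison[OF _ LIMSEQ_inverse_real_of_nat])
      (use X in \<open>auto intro!: always_eventually less_imp_le\<close>)
  with X show ?thesis by (auto simp: LIM_zero_iff)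
qed

lemma rescaled_subsequence:
  fixes Y :: "nat \<Rightarrow> 'a::euclidean_space"
  defines "\<nu> \<equiv> \<lambda>n. max 1 (norm (Y n))"
  obtains \<sigma> u \<mu> where "strict_mono \<sigma>"
    and "(\<lambda>n. (1 / \<nu> (\<sigma> n)) *\<^sub>R Y (\<sigma> n)) \<longlonglongrightarrow> u" and "(\<lambda>n. 1 / \<nu> (\<sigma> n)) \<longlonglongrightarrow> \<mu>"
    and "\<mu> = 0 \<Longrightarrow> norm u = 1" and "\<mu> \<noteq> 0 \<Longrightarrow> (\<lambda>n. Y (\<sigma> n)) \<longlonglongrightarrow> (1 / \<mu>) *\<^sub>R u"
proof -
  have \<nu>1: "\<nu> n \<ge> 1" for n by (simp add: \<nu>_def)
  define z where "z n = ((1 / \<nu> n) *\<^sub>R Y n, 1 / \<nu> n)" for n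
  have "norm (z n) \<le> 2" for n
  proof -
    have "norm ((1 / \<nu> n) *\<^sub>R Y n) \<le> 1" using \<nu>1[of n] by (simp add: \<nu>_def divide_le_eq)
    moreover have "norm (1 / \<nu> n) \<le> 1" using \<nu>1[of n] by simp
    ultimately show ?thesis using norm_Pair_le[of "(1 / \<nu> n) *\<^sub>R Y n" "1 / \<nu> n"] by (simp add: z_def)
  qed
  then have "bounded (range z)" unfolding bounded_iff by blast
  then obtain l \<sigma> where \<sigma>: "strict_mono \<sigma>" and zl: "(z \<circ> \<sigma>) \<longlonglongrightarrow> l"
    using bounded_imp_convergent_subsequence by blast
  obtain u \<mu> where l: "l = (u, \<mu>)" by (cases l)
  have uu: "(\<lambda>n. (1 / \<nu> (\<sigma> n)) *\<^sub>R Y (\<sigma> n)) \<longlonglongrightarrow> u"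
    using tendsto_fst[OF zl] by (simp add: l z_def comp_def)
  have mu: "(\<lambda>n. 1 / \<nu> (\<sigma> n)) \<longlonglongrightarrow> \<mu>"
    using tendsto_snd[OF zl] by (simp add: l z_def comp_def)
  have "norm u = 1" if "\<mu> = 0"
  proof -
    have "\<forall>\<^sub>F n in sequentially. 1 / \<nu> (\<sigma> n) < 1"
      using mu that by (auto simp: order_tendsto_iff)
    then have "\<forall>\<^sub>F n in sequentially. 1 = norm ((1 / \<nu> (\<sigma> n)) *\<^sub>R Y (\<sigma> n))"
      by eventually_elim (use \<nu>1 in \<open>auto simp: \<nu>_def max_def split: if_splits\<close>)
    then have "(\<lambda>n. norm ((1 / \<nu> (\<sigma> n)) *\<^sub>R Y (\<sigma> n))) \<longlonglongrightarrow> 1"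
      by (rule Lim_transform_eventually[OF tendsto_const])
    then show ?thesis using tendsto_norm[OF uu] LIMSEQ_unique by blast
  qed
  moreover have "(\<lambda>n. Y (\<sigma> n)) \<longlonglongrightarrow> (1 / \<mu>) *\<^sub>R u" if "\<mu> \<noteq> 0"
  proof -
    have "(\<lambda>n. (1 / (1 / \<nu> (\<sigma> n))) *\<^sub>R ((1 / \<nu> (\<sigma> n)) *\<^sub>R Y (\<sigma> n))) \<longlonglongrightarrow> (1 / \<mu>) *\<^sub>R u"
      using that by (intro tendsto_intros mu uu)
    moreover have "(1 / (1 / \<nu> (\<sigma> n))) *\<^sub>R ((1 / \<nu> (\<sigma> n)) *\<^sub>R Y (\<sigma> n)) = Y (\<sigma> n)" for n
      using \<nu>1[of "\<sigma> n"] by simp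
    ultimately show ?thesis by simp
  qed
  ultimately show ?thesis using that \<sigma> uu mu by blast
qed

lemma quadratic_absorb:
  fixes a b m c :: real
  assumes c: "c > 0" and nonneg: "a \<ge> 0" "b \<ge> 0" "m \<ge> 0" and h: "c * m^2 \<le> m * a + b^2"
  shows "m^2 \<le> (4 / c^2 + 2 / c) * (a^2 + b^2)"
proof -
  have "m^2 \<le> 4 * a^2 / c^2 + 2 * b^2 / c"
  proof (cases "m \<le> 2 * a / c")
    case True
    then have "m^2 \<le> (2 * a / c)^2" using nonneg by (intro power_mono) auto
    then have "m^2 \<le> 4 * a^2 / c^2" by (simp add: power_divide power_mult_distrib)
    moreover have "0 \<le> 2 * b^2 / c" using c by simp
    ultimately show ?thesis by linarith
  next
    case False
    then have "m * a \<le> m * (c * m / 2)" using c nonneg by (intro mult_left_mono) (auto simp: field_simps)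
    then have "m^2 \<le> 2 * b^2 / c" using h c by (simp add: power2_eq_square field_simps)
    then show ?thesis using c by (smt (verit) divide_nonneg_nonneg zero_le_power2)
  qed
  also have "\<dots> \<le> (4 / c^2 + 2 / c) * (a^2 + b^2)"
    using c by (simp add: field_simps)
  finally show ?thesis .
qed

lemma smooth_on_real_continuous:
  assumes "smooth_on_real S f"
  shows "continuous_on S f"
proof -
  obtain D where "D 0 = f" "deriv_tower_on S D"
    using assms unfolding smooth_on_real_def by blast
  then show ?thesis
    unfolding deriv_tower_on_def continuous_on_eq_continuous_within
    using has_vector_derivative_continuous by blast
qed

lemma mv_transpose_inner: "(A *v x) \<bullet> (y::real^'m) = x \<bullet> (transpose A *v y)"
  for A :: "real^'n^'m"
  by (metis dot_lmul_matrix inner_commute transpose_matrix_vector)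

lemma transpose_from_inner:
  fixes B :: "real^'n^'m"
  assumes "\<And>w. (B *v w) \<bullet> u = w \<bullet> c"
  shows "transpose B *v u = c"
proof -
  have "w \<bullet> (transpose B *v u - c) = 0" for w
    using assms[of w] by (simp add: mv_transpose_inner inner_diff_right)
  from this[of "transpose B *v u - c"] show ?thesis by simp
qed

lemma subspace_matrix_range: "subspace (range ((*v) (B::real^'n^'m)))"
  using linear_subspace_image[OF matrix_vector_mul_linear subspace_UNIV] by simp

lemma orthogonal_range_in_kernel_transpose:
  fixes B :: "real^'n^'m"
  assumes "b \<in> (range ((*v) B))\<^sup>\<bottom>"
  shows "transpose B *v b = 0"
proof -
  have "(B *v x) \<bullet> b = 0" for x using assms by (auto simp: orthogonal_comp_def orthogonal_def)
  then have "(transpose B *v b) \<bullet> (transpose B *v b) = 0"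
    using mv_transpose_inner[of B "transpose B *v b" b] by simp
  then show ?thesis by simp
qed

lemma range_of_perp:
  fixes B :: "real^'n^'m" and y :: "real^'m"
  assumes "\<And>z. transpose B *v z = 0 \<Longrightarrow> y \<bullet> z = 0"
  shows "\<exists>x. y = B *v x"
proof -
  let ?U = "range ((*v) B)"
  have "y \<in> ?U + ?U\<^sup>\<bottom>" using subspace_sum_orthogonal_comp[OF subspace_matrix_range] by auto
  then obtain a b where ab: "a \<in> ?U" "b \<in> ?U\<^sup>\<bottom>" "y = a + b"
    by (meson set_plus_elim)
  have "y \<bullet> b = 0" by (rule assms[OF orthogonal_range_in_kernel_transpose[OF ab(2)]])
  moreover have "a \<bullet> b = 0" using ab by (auto simp: orthogonal_comp_def orthogonal_def)
  ultimately have "b \<bullet> b = 0" using ab(3) by (simp add: inner_add_left)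
  with ab show ?thesis by auto
qed

lemma normal_equation_solvable:
  fixes A :: "real^'n^'n" and v :: "real^'n"
  assumes "\<And>z. A *v z = 0 \<Longrightarrow> v \<bullet> z = 0"
  shows "\<exists>x. transpose A *v (A *v x) = v"
proof -
  have "\<exists>x. v = (transpose A ** A) *v x"
  proof (rule range_of_perp)
    fix z assume "transpose (transpose A ** A) *v z = 0"
    then have "transpose A *v (A *v z) = 0"
      by (simp add: matrix_transpose_mul matrix_vector_mul_assoc)
    then have "(A *v z) \<bullet> (A *v z) = 0" by (simp add: mv_transpose_inner)
    then show "v \<bullet> z = 0" using assms by simp
  qed
  then show ?thesis by (metis matrix_vector_mul_assoc)
qed

lemma normal_equation_inner:
  fixes A :: "real^'n^'n"
  assumes "transpose A *v (A *v x) = v"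
  shows "v \<bullet> y = (A *v y) \<bullet> (A *v x)"
  using assms by (metis inner_commute mv_transpose_inner)

(* Completing the square: a solution x of the normal equation maximizes
   2 <v,y> - |A y|^2, with deficit |A (y - x)|^2. *)
lemma normal_equation_maximum:
  fixes A :: "real^'n^'n"
  assumes "transpose A *v (A *v x) = v"
  shows "2 * (v \<bullet> y) - (A *v y) \<bullet> (A *v y) = (A *v x) \<bullet> (A *v x) - (A *v (y - x)) \<bullet> (A *v (y - x))"
  by (simp add: normal_equation_inner[OF assms] matrix_vector_mult_diff_distrib
      inner_diff_left inner_diff_right inner_commute)

lemma projection_matrix:
  fixes K :: "(real^'n) set"
  assumes "subspace K"
  shows "\<exists>P::real^'n^'n. (\<forall>x. P *v x \<in> K) \<and> (\<forall>k\<in>K. P *v k = k)"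
proof -
  obtain B where B: "B \<subseteq> K" "pairwise orthogonal B" "\<And>x. x \<in> B \<Longrightarrow> norm x = 1"
    "independent B" "span B = K"
    using orthonormal_basis_subspace[OF assms] by metis
  then have fB: "finite B" by (simp add: independent_imp_finite)
  have orthonormal: "\<forall>x\<in>B. \<forall>y\<in>B. x \<bullet> y = (if x = y then 1 else 0)"
    using B(2,3) by (auto simp: orthogonal_def pairwise_def norm_eq_1)
  define p where "p = (\<lambda>v. \<Sum>b\<in>B. (v \<bullet> b) *\<^sub>R b)"
  have lp: "linear p"
    unfolding p_def by (auto simp: linear_iff inner_add_left scaleR_add_left sum.distrib scaleR_sum_right)
  have pK: "p v \<in> K" for v
    unfolding p_def by (metis (no_types, lifting) B(5) assms subspace_sum span_base span_mul subspace_span)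
  have orth: "y \<bullet> (v - p v) = 0" if "y \<in> K" for v y
  proof -
    have "y \<in> range (\<lambda>u. \<Sum>v\<in>B. u v *\<^sub>R v)" using that B(5) span_finite[OF fB] by simp
    then obtain u where u: "y = (\<Sum>b\<in>B. u b *\<^sub>R b)" by auto
    have "b \<bullet> (v - p v) = 0" if "b \<in> B" for b
      using that fB unfolding p_def
      by (simp add: orthonormal algebra_simps inner_sum_right if_distrib [of "(*)v" for v] inner_commute
          cong: if_cong)
    then show ?thesis by (simp add: u inner_sum_left)
  qed
  have "p k = k" if "k \<in> K" for k
    using orth[of "k - p k" k] that pK assms by (simp add: subspace_diff)
  then show ?thesis
    by (intro exI[of _ "matrix p"]) (simp add: matrix_works lp pK)
qed

lemma psd_quadratic_form_zero:
  fixes Q :: "real^'n^'n"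
  assumes sym: "transpose Q = Q" and nonneg: "\<And>x. 0 \<le> x \<bullet> (Q *v x)" and y: "y \<bullet> (Q *v y) = 0"
  shows "Q *v y = 0"
proof -
  have "w \<bullet> (Q *v y) = 0" for w
  proof (rule ccontr)
    assume b0: "w \<bullet> (Q *v y) \<noteq> 0"
    define b where "b = w \<bullet> (Q *v y)"
    define a where "a = w \<bullet> (Q *v w)"
    have a0: "a \<ge> 0" using nonneg by (simp add: a_def)
    define \<epsilon> where "\<epsilon> = 1 / (a + 1)"
    have ep: "\<epsilon> > 0" "\<epsilon> * a < 2" using a0 by (auto simp: \<epsilon>_def field_simps)
    define t where "t = - \<epsilon> * b"
    have sy: "y \<bullet> (Q *v w) = b"
      using mv_transpose_inner[of Q y w] sym by (simp add: b_def inner_commute)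
    have "(y + t *\<^sub>R w) \<bullet> (Q *v (y + t *\<^sub>R w)) = y \<bullet> (Q *v y) + 2 * t * b + t^2 * a"
      by (simp add: matrix_vector_right_distrib matrix_vector_mult_scaleR inner_add_left inner_add_right
          sy a_def b_def power2_eq_square algebra_simps inner_commute)
    also have "\<dots> = \<epsilon> * b^2 * (\<epsilon> * a - 2)" using y by (simp add: t_def power2_eq_square algebra_simps)
    also have "\<dots> < 0" using ep b0 by (intro mult_pos_neg) (auto simp: b_def)
    finally show False using nonneg[of "y + t *\<^sub>R w"] by simp
  qed
  from this[of "Q *v y"] show ?thesis by simp
qed

lemma singular_transpose_kernel:
  fixes A :: "real^'n^'n"
  assumes "\<not> invertible A"
  shows "\<exists>u. norm u = 1 \<and> transpose A *v u = 0"
proof -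
  have "\<not> invertible (transpose A)" using assms transpose_invertible[of "transpose A"] by auto
  then obtain x where x: "x \<noteq> 0" "transpose A *v x = 0"
    using matrix_left_invertible_ker invertible_left_inverse by metis
  then show ?thesis
    by (intro exI[of _ "(1 / norm x) *\<^sub>R x"]) (simp add: matrix_vector_mult_scaleR)
qed

lemma matrix_inv_works:
  fixes M :: "real^'n^'n"
  assumes "invertible M"
  shows "M ** matrix_inv M = mat 1" and "matrix_inv M ** M = mat 1"
  using someI_ex[OF assms[unfolded invertible_def]] unfolding matrix_inv_def by auto

lemma matrix_inv_apply:
  fixes M :: "real^'n^'n"
  assumes "invertible M"
  shows "M *v (matrix_inv M *v y) = y" and "matrix_inv M *v (M *v y) = y"
  using matrix_inv_works[OF assms] by (metis matrix_vector_mul_assoc matrix_vector_mul_lid)+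

lemma mv_norm_le: "norm (A *v x) \<le> (real CARD('m) * real CARD('n)) * norm A * norm x"
  for A :: "real^'n^'m"
proof -
  have "onorm ((*v) A) \<le> real CARD('m) * real CARD('n) * norm A"
    by (rule onorm_le_matrix_component)
      (meson component_le_norm_cart Finite_Cartesian_Product.norm_nth_le order_trans)
  moreover have "norm (A *v x) \<le> onorm ((*v) A) * norm x"
    by (rule onorm) simp
  ultimately show ?thesis
    by (meson mult_right_mono norm_ge_zero order_trans)
qed

lemma bounded_bilinear_mv: "bounded_bilinear (\<lambda>(M::real^'n^'m) (x::real^'n). M *v x)"
proof (rule bounded_bilinear.intro)
  show "\<exists>K. \<forall>a b. norm ((a::real^'n^'m) *v b) \<le> norm a * norm b * K"
  proof (intro exI allI)
    fix a :: "real^'n^'m" and b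
    show "norm (a *v b) \<le> norm a * norm b * (real CARD('m) * real CARD('n))"
      using mv_norm_le[of a b] by (simp add: mult_ac)
  qed
qed (simp_all add: matrix_vector_mult_add_rdistrib matrix_vector_right_distrib
      scaleR_matrix_vector_assoc matrix_vector_mult_scaleR)

lemma bounded_linear_transpose: "bounded_linear (transpose :: real^'n^'m \<Rightarrow> real^'m^'n)"
proof -
  have "linear (transpose :: real^'n^'m \<Rightarrow> real^'m^'n)"
    by (auto simp: linear_iff transpose_def vec_eq_iff)
  then show ?thesis by (simp add: linear_conv_bounded_linear)
qed

lemma continuous_matrix_bound:
  fixes F :: "real \<Rightarrow> real^'n^'m"
  assumes "continuous_on S F" and "compact S"
  shows "\<exists>B\<ge>0. \<forall>t\<in>S. \<forall>x. norm (F t *v x) \<le> B * norm x"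
proof -
  obtain M where M: "\<And>t. t \<in> S \<Longrightarrow> norm (F t) \<le> M"
    using compact_imp_bounded[OF compact_continuous_image[OF assms]] by (auto simp: bounded_iff)
  let ?B = "real CARD('m) * real CARD('n) * max M 0"
  have "norm (F t *v x) \<le> ?B * norm x" if "t \<in> S" for t x
  proof -
    have "norm (F t *v x) \<le> real CARD('m) * real CARD('n) * norm (F t) * norm x" by (rule mv_norm_le)
    also have "\<dots> \<le> ?B * norm x"
      using M[OF that] by (intro mult_right_mono mult_left_mono) auto
    finally show ?thesis .
  qed
  then show ?thesis by (intro exI[of _ ?B]) auto
qed

locale lagrange_setting =
  fixes t0 t1 :: real and R :: "real \<Rightarrow> real^'n^'n" and DA :: "nat \<Rightarrow> real \<Rightarrow> real^'n^'n"
  assumes t01: "t0 < t1"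
    and R_cont: "continuous_on {t0..t1} R"
    and R_sym: "\<And>t. t \<in> {t0..t1} \<Longrightarrow> transpose (R t) = R t"
    and R_nonneg: "\<And>t x. t \<in> {t0..t1} \<Longrightarrow> 0 \<le> x \<bullet> (R t *v x)"
    and lag: "lagrange_tensor t0 t1 R DA"
begin

lemma tensor_deriv: "t \<in> {t0..t1} \<Longrightarrow> (DA k has_vector_derivative DA (Suc k) t) (at t within {t0..t1})"
  using lag unfolding lagrange_tensor_def deriv_tower_on_def by blast

lemma field_deriv:
  "t \<in> {t0..t1} \<Longrightarrow> ((\<lambda>r. DA k r *v x) has_vector_derivative DA (Suc k) t *v x) (at t within {t0..t1})"
  by (rule bounded_linear.has_vector_derivative[OF bounded_bilinear.bounded_linear_left[OF bounded_bilinear_mv] tensor_deriv])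

lemma field_deriv_interior:
  "t0 < t \<Longrightarrow> t < t1 \<Longrightarrow> ((\<lambda>r. DA k r *v x) has_vector_derivative DA (Suc k) t *v x) (at t)"
  using field_deriv[of t k x] at_within_interior[of t "{t0..t1}"] by simp

lemma field_deriv01: "t \<in> {t0..t1} \<Longrightarrow> ((\<lambda>r. DA 0 r *v x) has_vector_derivative DA 1 t *v x) (at t within {t0..t1})"
  using field_deriv[of t 0 x] by simp

lemma field_deriv01_interior: "t0 < t \<Longrightarrow> t < t1 \<Longrightarrow> ((\<lambda>r. DA 0 r *v x) has_vector_derivative DA 1 t *v x) (at t)"
  using field_deriv_interior[of t 0 x] by simp

lemma field_deriv12_interior: "t0 < t \<Longrightarrow> t < t1 \<Longrightarrow> ((\<lambda>r. DA 1 r *v x) has_vector_derivative DA 2 t *v x) (at t)"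
  using field_deriv_interior[of t 1 x] by (simp add: numeral_2_eq_2)

lemma tensor_continuous: "continuous_on {t0..t1} (DA k)"
  unfolding continuous_on_eq_continuous_within using tensor_deriv has_vector_derivative_continuous by blast

lemma field_continuous: "continuous_on {t0..t1} (\<lambda>r. DA k r *v x)"
  unfolding continuous_on_eq_continuous_within using field_deriv has_vector_derivative_continuous by blast

lemma jacobi: "t \<in> {t0..t1} \<Longrightarrow> DA 2 t *v x = - (R t *v (DA 0 t *v x))"
proof -
  assume "t \<in> {t0..t1}"
  then have "(DA 2 t + R t ** DA 0 t) *v x = 0" using lag unfolding lagrange_tensor_def by simp
  then show ?thesis by (simp add: matrix_vector_mult_add_rdistrib matrix_vector_mul_assoc eq_neg_iff_add_eq_0)
qed

lemma lagrangian: "t \<in> {t0..t1} \<Longrightarrow> (DA 1 t *v x) \<bullet> (DA 0 t *v y) = (DA 0 t *v x) \<bullet> (DA 1 t *v y)"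
  using lag unfolding lagrange_tensor_def by blast

lemma lagrangian_transpose:
  assumes "t \<in> {t0..t1}"
  shows "transpose (DA 1 t) *v (DA 0 t *v w) = transpose (DA 0 t) *v (DA 1 t *v w)"
proof (rule transpose_from_inner)
  fix y
  show "(DA 1 t *v y) \<bullet> (DA 0 t *v w) = y \<bullet> (transpose (DA 0 t) *v (DA 1 t *v w))"
    using lagrangian[OF assms, of y w] mv_transpose_inner[of "DA 0 t" y "DA 1 t *v w"] by simp
qed

definition kernel_energy :: "real^'n \<Rightarrow> real \<Rightarrow> real" where
  "kernel_energy k r = (DA 0 r *v k) \<bullet> (DA 0 r *v k) + (DA 1 r *v k) \<bullet> (DA 1 r *v k)"

lemma kernel_energy_growth:
  "\<exists>C. \<forall>r. t0 < r \<and> r < t1 \<longrightarrow> (\<exists>e'. (kernel_energy k has_real_derivative e') (at r)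
      \<and> \<bar>e'\<bar> \<le> C * kernel_energy k r)"
proof -
  obtain B where B: "B \<ge> 0" "\<And>t x. t \<in> {t0..t1} \<Longrightarrow> norm (R t *v x) \<le> B * norm x"
    using continuous_matrix_bound[OF R_cont compact_Icc] by blast
  have "\<exists>e'. (kernel_energy k has_real_derivative e') (at r) \<and> \<bar>e'\<bar> \<le> (1 + B) * kernel_energy k r"
    if r: "t0 < r" "r < t1" for r
  proof (intro exI conjI)
    let ?a = "norm (DA 0 r *v k)" and ?b = "norm (DA 1 r *v k)"
    let ?e' = "2 * ((DA 0 r *v k) \<bullet> (DA 1 r *v k)) + 2 * ((DA 1 r *v k) \<bullet> (DA 2 r *v k))"
    have "(kernel_energy k has_real_derivative
        ((DA 0 r *v k) \<bullet> (DA 1 r *v k) + (DA 1 r *v k) \<bullet> (DA 0 r *v k)) +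
        ((DA 1 r *v k) \<bullet> (DA 2 r *v k) + (DA 2 r *v k) \<bullet> (DA 1 r *v k))) (at r)"
      unfolding kernel_energy_def[abs_def]
      by (intro DERIV_add has_real_derivative_inner field_deriv01_interior[OF r] field_deriv12_interior[OF r])
    then show "(kernel_energy k has_real_derivative ?e') (at r)" by (simp add: inner_commute)
    have "norm (DA 2 r *v k) \<le> B * ?a" using B(2)[of r] r by (simp add: jacobi)
    then have "\<bar>(DA 1 r *v k) \<bullet> (DA 2 r *v k)\<bar> \<le> ?b * (B * ?a)"
      by (meson Cauchy_Schwarz_ineq2 mult_left_mono norm_ge_zero order_trans)
    moreover have "\<bar>(DA 0 r *v k) \<bullet> (DA 1 r *v k)\<bar> \<le> ?a * ?b" by (rule Cauchy_Schwarz_ineq2)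
    ultimately have "\<bar>?e'\<bar> \<le> (1 + B) * (2 * ?a * ?b)" by (simp add: algebra_simps)
    also have "\<dots> \<le> (1 + B) * (?a^2 + ?b^2)"
      using B(1) by (intro mult_left_mono) (auto simp: sum_squares_bound)
    finally show "\<bar>?e'\<bar> \<le> (1 + B) * kernel_energy k r"
      by (simp add: kernel_energy_def power2_norm_eq_inner)
  qed
  then show ?thesis by blast
qed

(* Nondegeneracy propagates: if A_s k = A'_s k = 0 at some s, the Jacobi field A_r k
   vanishes identically, so k = 0 by the nondegeneracy at the base point t0. *)
lemma kernel_nondegenerate:
  assumes s: "s \<in> {t0..t1}" and k0: "DA 0 s *v k = 0" and k1: "DA 1 s *v k = 0"
  shows "k = 0"
proof -
  obtain C where C: "\<And>r. t0 < r \<Longrightarrow> r < t1 \<Longrightarrow>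
      \<exists>e'. (kernel_energy k has_real_derivative e') (at r) \<and> \<bar>e'\<bar> \<le> C * kernel_energy k r"
    using kernel_energy_growth by blast
  then obtain e' where e': "\<And>r. t0 < r \<Longrightarrow> r < t1 \<Longrightarrow>
      (kernel_energy k has_real_derivative e' r) (at r) \<and> \<bar>e' r\<bar> \<le> C * kernel_energy k r"
    by metis
  have "kernel_energy k t0 = 0"
    by (rule gronwall_vanishing[of t0 t1 "kernel_energy k" e' C s])
      (use e' s k0 k1 t01 in \<open>auto simp: kernel_energy_def intro!: continuous_intros field_continuous\<close>)
  then have "DA 0 t0 *v k = 0" "DA 1 t0 *v k = 0"
    by (auto simp: kernel_energy_def add_nonneg_eq_0_iff)
  then show ?thesis using lag unfolding lagrange_tensor_def by blast
qed

(* By the Lagrange symmetry, A'_s maps ker A_s into the kernel of the transpose of A_s. *)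
lemma derivative_kernel_in_cokernel:
  assumes s: "s \<in> {t0..t1}" and k: "DA 0 s *v k = 0"
  shows "transpose (DA 0 s) *v (DA 1 s *v k) = 0"
proof -
  let ?w = "transpose (DA 0 s) *v (DA 1 s *v k)"
  have "(DA 0 s *v y) \<bullet> (DA 1 s *v k) = 0" for y
    using lagrangian[OF s, of k y] k by (simp add: inner_commute)
  then have "?w \<bullet> ?w = 0" by (simp add: mv_transpose_inner)
  then show ?thesis by simp
qed

(* Conversely, the kernel of the transpose of A_s equals A'_s(ker A_s): with P a projection
   onto ker A_s, the map A_s + A'_s P is injective, hence surjective. *)
lemma cokernel_from_kernel:
  assumes s: "s \<in> {t0..t1}" and u: "transpose (DA 0 s) *v u = 0"
  shows "\<exists>k. DA 0 s *v k = 0 \<and> u = DA 1 s *v k"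
proof -
  let ?A = "DA 0 s" and ?A' = "DA 1 s"
  have "subspace {k. ?A *v k = 0}"
    by (auto simp: subspace_def matrix_vector_right_distrib matrix_vector_mult_scaleR)
  from projection_matrix[OF this] obtain P
    where P: "\<And>x. ?A *v (P *v x) = 0" "\<And>k. ?A *v k = 0 \<Longrightarrow> P *v k = k"
    by auto
  have split: "?A *v x = 0 \<and> ?A' *v (P *v x) = u'"
    if x: "?A *v x + ?A' *v (P *v x) = u'" and u': "transpose ?A *v u' = 0" for x u'
  proof -
    have "transpose ?A *v (?A' *v (P *v x)) = 0" using derivative_kernel_in_cokernel[OF s P(1)] .
    moreover have "?A *v x = u' - ?A' *v (P *v x)" using x by (simp add: algebra_simps)
    ultimately have "transpose ?A *v (?A *v x) = 0" using u' by (simp add: matrix_vector_mult_diff_distrib)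
    then have "(?A *v x) \<bullet> (?A *v x) = 0" by (simp add: mv_transpose_inner)
    then have "?A *v x = 0" by simp
    with x show ?thesis by simp
  qed
  let ?T = "?A + ?A' ** P"
  have T_apply: "?T *v x = ?A *v x + ?A' *v (P *v x)" for x
    by (simp add: matrix_vector_mult_add_rdistrib matrix_vector_mul_assoc)
  have "x = 0" if "?T *v x = 0" for x
  proof -
    have "?A *v x + ?A' *v (P *v x) = 0" using that by (simp only: T_apply)
    then have x0: "?A *v x = 0" "?A' *v (P *v x) = 0" using split[of x 0] by simp_all
    then have "P *v x = 0" using kernel_nondegenerate[OF s P(1)] by blast
    then show ?thesis using P(2)[OF x0(1)] by simp
  qed
  then have "\<exists>B. B ** ?T = mat 1" by (simp add: matrix_left_invertible_ker)
  then have "invertible ?T" by (simp add: invertible_left_inverse)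
  then obtain T' where T': "?T ** T' = mat 1" by (auto simp: invertible_def)
  have "?T *v (T' *v u) = u" unfolding matrix_vector_mul_assoc T' by simp
  then have "?A *v (T' *v u) + ?A' *v (P *v (T' *v u)) = u" by (simp only: T_apply)
  then have "?A' *v (P *v (T' *v u)) = u" using split[OF _ u] by blast
  then show ?thesis using P(1) by (intro exI[of _ "P *v (T' *v u)"]) simp
qed

(* By nondegeneracy and compactness, the Jacobi energy is bounded below by c |k|^2. *)
lemma coercive_bound: "\<exists>c>0. \<forall>r\<in>{t0..t1}. \<forall>k. c * (k \<bullet> k) \<le> kernel_energy k r"
proof -
  define S where "S = {t0..t1} \<times> sphere (0::real^'n) 1"
  define f where "f p = kernel_energy (snd p) (fst p)" for p
  have cS: "compact S" unfolding S_def by (intro compact_Times compact_Icc compact_sphere)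
  obtain e :: "real^'n" where e: "norm e = 1" using vector_choose_size[of 1] by auto
  have nS: "S \<noteq> {}" using e t01 unfolding S_def by (auto intro!: exI[of _ "(t0, e)"])
  have c0: "continuous_on S (\<lambda>p. DA k (fst p))" for k
    by (rule continuous_on_compose2[OF tensor_continuous continuous_on_fst[OF continuous_on_id]]) (auto simp: S_def)
  have c1: "continuous_on S (\<lambda>p. DA k (fst p) *v snd p)" for k
    by (rule bounded_bilinear.continuous_on[OF bounded_bilinear_mv c0 continuous_on_snd[OF continuous_on_id]])
  have "continuous_on S f" unfolding f_def kernel_energy_def by (intro continuous_intros c1)
  then obtain p0 where p0: "p0 \<in> S" and pmin: "\<And>p. p \<in> S \<Longrightarrow> f p0 \<le> f p"
    using continuous_attains_inf[OF cS nS] by blast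
  have fpos: "f p0 > 0"
  proof -
    obtain r0 k0 where rk: "p0 = (r0, k0)" by (cases p0)
    have r0: "r0 \<in> {t0..t1}" and k0: "k0 \<noteq> 0" using p0 rk by (auto simp: S_def)
    have "f p0 \<noteq> 0"
      using kernel_nondegenerate[OF r0] k0 by (auto simp: f_def rk kernel_energy_def add_nonneg_eq_0_iff)
    then show ?thesis by (simp add: f_def kernel_energy_def less_le)
  qed
  have "f p0 * (k \<bullet> k) \<le> kernel_energy k r" if r: "r \<in> {t0..t1}" for r k
  proof (cases "k = 0")
    case False
    define u where "u = (1 / norm k) *\<^sub>R k"
    have "(r, u) \<in> S" using False r by (simp add: S_def u_def)
    then have "f p0 \<le> f (r, u)" using pmin by simp
    also have "f (r, u) = kernel_energy k r / (k \<bullet> k)"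
      using False by (simp add: f_def u_def kernel_energy_def matrix_vector_mult_scaleR
          power2_norm_eq_inner[symmetric] power2_eq_square add_divide_distrib)
    finally show ?thesis using False by (simp add: pos_le_divide_eq)
  qed (simp add: kernel_energy_def)
  then show ?thesis using fpos by blast
qed

lemma limit_kernel_perp:
  assumes s: "s \<in> {t0..t1}" and r: "\<And>n. r n \<in> {t0..t1}" "\<And>n. r n \<noteq> s" "r \<longlonglongrightarrow> s"
    and u: "u \<longlonglongrightarrow> u0" and k: "DA 0 s *v k = 0"
    and perp: "\<And>n. u n \<bullet> (DA 0 (r n) *v k) = 0"
  shows "u0 \<bullet> (DA 1 s *v k) = 0"
proof -
  have "((\<lambda>y. (1 / (y - s)) *\<^sub>R (DA 0 y *v k - DA 0 s *v k)) \<longlongrightarrow> DA 1 s *v k) (at s within {t0..t1})"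
    by (rule has_vector_derivative_quotient[OF field_deriv01[OF s]])
  then have "(\<lambda>n. (1 / (r n - s)) *\<^sub>R (DA 0 (r n) *v k)) \<longlonglongrightarrow> DA 1 s *v k"
    using r k unfolding tendsto_at_iff_sequentially comp_def by force
  from tendsto_inner[OF u this] have "(\<lambda>n. 0) \<longlonglongrightarrow> u0 \<bullet> (DA 1 s *v k)"
    using perp by (simp add: inner_scaleR_right)
  then show ?thesis using LIMSEQ_unique[OF tendsto_const] by metis
qed

lemma limit_pairing:
  assumes s: "s \<in> {t0..t1}" and r: "\<And>n. r n \<in> {t0..t1}" "r \<longlonglongrightarrow> s" and u: "u \<longlonglongrightarrow> u0"
  shows "(\<lambda>n. (DA 0 (r n) *v w) \<bullet> u n) \<longlonglongrightarrow> (DA 0 s *v w) \<bullet> u0"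
proof -
  have "(\<lambda>n. DA 0 (r n) *v w) \<longlonglongrightarrow> DA 0 s *v w"
    by (rule continuous_on_tendsto_compose[OF field_continuous r(2) s]) (use r in auto)
  then show ?thesis by (rule tendsto_inner[OF _ u])
qed

lemma range_from_kernel_perp:
  assumes s: "s \<in> {t0..t1}" and "\<And>k. DA 0 s *v k = 0 \<Longrightarrow> u \<bullet> (DA 1 s *v k) = 0"
  shows "\<exists>w. u = DA 0 s *v w"
proof (rule range_of_perp)
  fix z assume "transpose (DA 0 s) *v z = 0"
  then obtain k where "DA 0 s *v k = 0" "z = DA 1 s *v k" using cokernel_from_kernel[OF s] by blast
  then show "u \<bullet> z = 0" using assms(2) by simp
qed

end

locale lagrange_vector_setting = lagrange_setting t0 t1 R DA
  for t0 t1 :: real and R :: "real \<Rightarrow> real^'n^'n" and DA :: "nat \<Rightarrow> real \<Rightarrow> real^'n^'n" +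
  fixes v :: "real^'n"
  assumes v_nz: "v \<noteq> 0"
    and v_perp: "\<And>t x. t \<in> {t0..t1} \<Longrightarrow> DA 0 t *v x = 0 \<Longrightarrow> v \<bullet> x = 0"
begin

definition normal_solution :: "real \<Rightarrow> real^'n \<Rightarrow> bool" where
  "normal_solution t x \<longleftrightarrow> transpose (DA 0 t) *v (DA 0 t *v x) = v"

(* The maximal value h(t) = |A_t x|^2 for any such x; at regular points h = |A_t^{-*} v|^2. *)
definition dual_energy :: "real \<Rightarrow> real" where
  "dual_energy t = (let x = SOME x. normal_solution t x in (DA 0 t *v x) \<bullet> (DA 0 t *v x))"

lemma normal_solution_exists: "t \<in> {t0..t1} \<Longrightarrow> \<exists>x. normal_solution t x"
  unfolding normal_solution_def by (rule normal_equation_solvable) (use v_perp in auto)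

lemma normal_solution_inner: "normal_solution t x \<Longrightarrow> v \<bullet> y = (DA 0 t *v y) \<bullet> (DA 0 t *v x)"
  unfolding normal_solution_def by (rule normal_equation_inner)

lemma dual_energy_eq:
  assumes "t \<in> {t0..t1}" "normal_solution t x"
  shows "dual_energy t = (DA 0 t *v x) \<bullet> (DA 0 t *v x)"
proof -
  let ?x = "SOME x. normal_solution t x"
  have sx: "normal_solution t ?x" using normal_solution_exists[OF assms(1)] by (rule someI_ex)
  have "(DA 0 t *v ?x) \<bullet> (DA 0 t *v ?x) = v \<bullet> ?x" using normal_solution_inner[OF sx, of ?x] by simp
  also have "\<dots> = v \<bullet> x" using normal_solution_inner[OF assms(2), of ?x] normal_solution_inner[OF sx, of x]
    by (simp add: inner_commute)
  also have "\<dots> = (DA 0 t *v x) \<bullet> (DA 0 t *v x)" using normal_solution_inner[OF assms(2), of x] .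
  finally show ?thesis unfolding dual_energy_def by (simp add: Let_def)
qed

lemma dual_energy_ge:
  assumes "t \<in> {t0..t1}"
  shows "2 * (v \<bullet> y) - (DA 0 t *v y) \<bullet> (DA 0 t *v y) \<le> dual_energy t"
proof -
  obtain x where x: "normal_solution t x" using normal_solution_exists[OF assms] by blast
  show ?thesis using normal_equation_maximum[OF x[unfolded normal_solution_def], of y]
      dual_energy_eq[OF assms x] by simp
qed

lemma dual_energy_pos:
  assumes "t \<in> {t0..t1}"
  shows "dual_energy t > 0"
proof -
  obtain x where x: "normal_solution t x" using normal_solution_exists[OF assms] by blast
  then have "DA 0 t *v x \<noteq> 0" using v_nz by (auto simp: normal_solution_def)
  then show ?thesis using dual_energy_eq[OF assms x] by simp
qed

lemma dual_limit:
  assumes s: "s \<in> {t0..t1}" and r: "\<And>n. r n \<in> {t0..t1}" "\<And>n. r n \<noteq> s" "r \<longlonglongrightarrow> s"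
    and u: "u \<longlonglongrightarrow> u0" and c: "c \<longlonglongrightarrow> \<mu>"
    and pairing: "\<And>n w. (DA 0 (r n) *v w) \<bullet> u n = c n * (v \<bullet> w)"
  shows "\<exists>w0. u0 = DA 0 s *v w0 \<and> transpose (DA 0 s) *v u0 = \<mu> *\<^sub>R v"
proof -
  have "u n \<bullet> (DA 0 (r n) *v k) = 0" if "DA 0 s *v k = 0" for n k
    using pairing[of n k] v_perp[OF s that] by (simp add: inner_commute)
  then have "u0 \<bullet> (DA 1 s *v k) = 0" if "DA 0 s *v k = 0" for k
    using limit_kernel_perp[OF s r u that] that by blast
  then obtain w0 where "u0 = DA 0 s *v w0" using range_from_kernel_perp[OF s] by blast
  moreover have "transpose (DA 0 s) *v u0 = \<mu> *\<^sub>R v"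
  proof (rule transpose_from_inner)
    fix w
    have "(\<lambda>n. c n * (v \<bullet> w)) \<longlonglongrightarrow> (DA 0 s *v w) \<bullet> u0"
      using limit_pairing[OF s r(1,3) u, of w] by (simp add: pairing)
    moreover have "(\<lambda>n. c n * (v \<bullet> w)) \<longlonglongrightarrow> \<mu> * (v \<bullet> w)" by (intro tendsto_intros c)
    ultimately show "(DA 0 s *v w) \<bullet> u0 = w \<bullet> (\<mu> *\<^sub>R v)"
      using LIMSEQ_unique by (metis inner_commute inner_scaleR_right)
  qed
  ultimately show ?thesis by blast
qed

(* Along any sequence r_n -> s, a subsequence of h(r_n) converges to h(s): rescale the
   images A x_n of normal solutions and apply the limit lemma; a zero scaling limit is impossible. *)
lemma dual_energy_subsequence_limit:
  assumes s: "s \<in> {t0..t1}" and r: "\<And>n. r n \<in> {t0..t1}" "\<And>n. r n \<noteq> s" "r \<longlonglongrightarrow> s"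
  shows "\<exists>\<sigma>. strict_mono \<sigma> \<and> (\<lambda>n. dual_energy (r (\<sigma> n))) \<longlonglongrightarrow> dual_energy s"
proof -
  have "\<forall>n. \<exists>x. normal_solution (r n) x" using normal_solution_exists r(1) by blast
  then obtain x where x: "\<And>n. normal_solution (r n) (x n)" by metis
  define Y where "Y n = DA 0 (r n) *v x n" for n
  define \<nu> where "\<nu> n = max 1 (norm (Y n))" for n
  obtain \<sigma> u \<mu> where \<sigma>: "strict_mono \<sigma>"
    and uu: "(\<lambda>n. (1 / \<nu> (\<sigma> n)) *\<^sub>R Y (\<sigma> n)) \<longlonglongrightarrow> u" and mu: "(\<lambda>n. 1 / \<nu> (\<sigma> n)) \<longlonglongrightarrow> \<mu>"
    and unit: "\<mu> = 0 \<Longrightarrow> norm u = 1" and Ylim: "\<mu> \<noteq> 0 \<Longrightarrow> (\<lambda>n. Y (\<sigma> n)) \<longlonglongrightarrow> (1 / \<mu>) *\<^sub>R u"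
    using rescaled_subsequence[of Y] unfolding \<nu>_def by blast
  have rr: "(\<lambda>n. r (\<sigma> n)) \<longlonglongrightarrow> s" using LIMSEQ_subseq_LIMSEQ[OF r(3) \<sigma>] by (simp add: comp_def)
  have "(DA 0 (r (\<sigma> n)) *v w) \<bullet> ((1 / \<nu> (\<sigma> n)) *\<^sub>R Y (\<sigma> n)) = 1 / \<nu> (\<sigma> n) * (v \<bullet> w)" for n w
    using normal_solution_inner[OF x[of "\<sigma> n"], of w] by (simp add: Y_def)
  then obtain w0 where w0: "u = DA 0 s *v w0" and uT: "transpose (DA 0 s) *v u = \<mu> *\<^sub>R v"
    using dual_limit[OF s r(1,2) rr uu mu] by blast
  have "\<mu> \<noteq> 0"
  proof
    assume "\<mu> = 0"
    then have "u \<bullet> u = 0" using uT w0 mv_transpose_inner[of "DA 0 s" w0 u] by simp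
    with unit \<open>\<mu> = 0\<close> show False by simp
  qed
  then have "normal_solution s ((1 / \<mu>) *\<^sub>R w0)"
    using uT w0 by (simp add: normal_solution_def matrix_vector_mult_scaleR)
  then have "dual_energy s = ((1 / \<mu>) *\<^sub>R u) \<bullet> ((1 / \<mu>) *\<^sub>R u)"
    using dual_energy_eq[OF s] w0 by (simp add: matrix_vector_mult_scaleR)
  moreover have "dual_energy (r (\<sigma> n)) = Y (\<sigma> n) \<bullet> Y (\<sigma> n)" for n
    using dual_energy_eq[OF r(1) x] by (simp add: Y_def)
  ultimately have "(\<lambda>n. dual_energy (r (\<sigma> n))) \<longlonglongrightarrow> dual_energy s"
    using tendsto_inner[OF Ylim Ylim] \<open>\<mu> \<noteq> 0\<close> by simp
  with \<sigma> show ?thesis by blast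
qed

lemma dual_energy_continuous: "continuous_on {t0..t1} dual_energy"
  unfolding continuous_on_eq_continuous_within
proof (rule ballI, rule ccontr)
  fix s assume s: "s \<in> {t0..t1}" and "\<not> continuous (at s within {t0..t1}) dual_energy"
  then have "\<exists>\<epsilon>>0. \<forall>\<delta>>0. \<exists>r\<in>{t0..t1}. \<bar>r - s\<bar> < \<delta> \<and> \<epsilon> \<le> \<bar>dual_energy r - dual_energy s\<bar>"
    unfolding continuous_within_eps_delta by (simp add: dist_real_def not_less) (meson not_le)
  then obtain \<epsilon> where \<epsilon>: "\<epsilon> > 0"
    and far: "\<And>\<delta>. \<delta> > 0 \<Longrightarrow> \<exists>r\<in>{t0..t1}. \<bar>r - s\<bar> < \<delta> \<and> \<epsilon> \<le> \<bar>dual_energy r - dual_energy s\<bar>"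
    by blast
  obtain r where r: "\<And>n. r n \<in> {t0..t1} \<and> \<epsilon> \<le> \<bar>dual_energy (r n) - dual_energy s\<bar>" and rs: "r \<longlonglongrightarrow> s"
    using sequence_approaching[of "\<lambda>r. r \<in> {t0..t1} \<and> \<epsilon> \<le> \<bar>dual_energy r - dual_energy s\<bar>" s] far by blast
  have rI: "r n \<in> {t0..t1}" and rne: "r n \<noteq> s" for n using r[of n] \<epsilon> by auto
  obtain \<sigma> where "(\<lambda>n. dual_energy (r (\<sigma> n))) \<longlonglongrightarrow> dual_energy s"
    using dual_energy_subsequence_limit[OF s rI rne rs] by blast
  then obtain N where "\<bar>dual_energy (r (\<sigma> N)) - dual_energy s\<bar> < \<epsilon>"
    using \<epsilon> unfolding LIMSEQ_def dist_real_def by blast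
  then show False using r[of "\<sigma> N"] by simp
qed

(* Singular instants of A are isolated, by the same limit lemma with mu = 0. *)
lemma singular_points_isolated:
  assumes s: "s \<in> {t0..t1}"
  shows "\<exists>\<delta>>0. \<forall>r\<in>{t0..t1}. r \<noteq> s \<and> \<bar>r - s\<bar> < \<delta> \<longrightarrow> invertible (DA 0 r)"
proof (rule ccontr)
  assume "\<not> ?thesis"
  then obtain r where r: "\<And>n. r n \<in> {t0..t1} \<and> r n \<noteq> s \<and> \<not> invertible (DA 0 (r n))" and rs: "r \<longlonglongrightarrow> s"
    using sequence_approaching[of "\<lambda>r. r \<in> {t0..t1} \<and> r \<noteq> s \<and> \<not> invertible (DA 0 r)" s]
    by (metis (no_types, lifting))
  have "\<forall>n. \<exists>u. norm u = 1 \<and> transpose (DA 0 (r n)) *v u = 0" using singular_transpose_kernel r by blast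
  then obtain u where u: "\<And>n. norm (u n) = 1" "\<And>n. transpose (DA 0 (r n)) *v u n = 0" by metis
  have "bounded (range u)" unfolding bounded_iff using u(1) by (intro exI[of _ 1]) simp
  then obtain u0 \<sigma> where \<sigma>: "strict_mono \<sigma>" and ul: "(\<lambda>n. u (\<sigma> n)) \<longlonglongrightarrow> u0"
    using bounded_imp_convergent_subsequence unfolding comp_def by blast
  have rr: "(\<lambda>n. r (\<sigma> n)) \<longlonglongrightarrow> s" using LIMSEQ_subseq_LIMSEQ[OF rs \<sigma>] by (simp add: comp_def)
  have "(DA 0 (r (\<sigma> n)) *v w) \<bullet> u (\<sigma> n) = 0 * (v \<bullet> w)" for n w
    using u(2) by (simp add: mv_transpose_inner)
  then obtain w0 where "u0 = DA 0 s *v w0" and "transpose (DA 0 s) *v u0 = 0"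
    using dual_limit[of s "\<lambda>n. r (\<sigma> n)" "\<lambda>n. u (\<sigma> n)" u0 "\<lambda>n. 0" 0] s r rr ul by auto
  then have "u0 = 0" using mv_transpose_inner[of "DA 0 s" w0 u0] by simp
  moreover have "norm u0 = 1" using tendsto_norm[OF ul] u(1) by (simp add: LIMSEQ_const_iff)
  ultimately show False by simp
qed

lemma regular_normal_solution:
  assumes t: "t \<in> {t0..t1}" and inv: "invertible (DA 0 t)"
  defines "x \<equiv> matrix_inv (DA 0 t) *v (inv_adj (DA 0 t) *v v)"
  shows "normal_solution t x" and "DA 0 t *v x = inv_adj (DA 0 t) *v v"
    and "dual_energy t = (norm (inv_adj (DA 0 t) *v v))\<^sup>2"
proof -
  show Ax: "DA 0 t *v x = inv_adj (DA 0 t) *v v"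
    unfolding x_def by (rule matrix_inv_apply(1)[OF inv])
  show sx: "normal_solution t x"
    unfolding normal_solution_def Ax inv_adj_def by (rule matrix_inv_apply(1)[OF transpose_invertible[OF inv]])
  show "dual_energy t = (norm (inv_adj (DA 0 t) *v v))\<^sup>2"
    using dual_energy_eq[OF t sx] Ax by (simp add: power2_norm_eq_inner)
qed

lemma critical_function_from_energy:
  assumes g_cont: "continuous_on {t0..t1} g"
    and g_reg: "\<And>t. t \<in> {t0..t1} \<Longrightarrow> invertible (DA 0 t) \<Longrightarrow> g t = (norm v)\<^sup>2 / norm (inv_adj (DA 0 t) *v v)"
    and s: "s \<in> {t0..t1}"
  shows "g s = (norm v)\<^sup>2 / sqrt (dual_energy s)"
proof -
  define G where "G t = (norm v)\<^sup>2 / sqrt (dual_energy t)" for t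
  have "continuous_on {t0..t1} G"
    unfolding G_def using dual_energy_pos by (intro continuous_intros dual_energy_continuous) force
  then have G_lim: "(G \<longlongrightarrow> G s) (at s within {t0..t1})" using s by (simp add: continuous_on_def)
  have g_lim: "(g \<longlongrightarrow> g s) (at s within {t0..t1})" using g_cont s by (simp add: continuous_on_def)
  obtain \<delta> where \<delta>: "\<delta> > 0" and regular: "\<And>r. r \<in> {t0..t1} \<Longrightarrow> r \<noteq> s \<Longrightarrow> \<bar>r - s\<bar> < \<delta> \<Longrightarrow> invertible (DA 0 r)"
    using singular_points_isolated[OF s] by blast
  have "\<forall>\<^sub>F r in at s within {t0..t1}. g r = G r"
    unfolding eventually_at using \<delta> regular g_reg regular_normal_solution(3)
    by (intro exI[of _ \<delta>]) (auto simp: dist_real_def G_def)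
  then have "(G \<longlongrightarrow> g s) (at s within {t0..t1})" by (rule Lim_transform_eventually[OF g_lim])
  moreover have "at s within {t0..t1} \<noteq> bot" using t01 s by (simp add: trivial_limit_within islimpt_Icc)
  ultimately show ?thesis using tendsto_unique G_lim by (fastforce simp: G_def)
qed

(* So h = |v|^4 / g^2, and h has vanishing derivative wherever g has. *)
lemma dual_energy_flat:
  assumes g_cont: "continuous_on {t0..t1} g"
    and g_reg: "\<And>t. t \<in> {t0..t1} \<Longrightarrow> invertible (DA 0 t) \<Longrightarrow> g t = (norm v)\<^sup>2 / norm (inv_adj (DA 0 t) *v v)"
    and g_flat: "(g has_real_derivative 0) (at a within {t0..t1})" and a: "a \<in> {t0..t1}"
  shows "(dual_energy has_real_derivative 0) (at a within {t0..t1})"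
proof -
  let ?c = "((norm v)\<^sup>2)\<^sup>2"
  have energy: "dual_energy r = ?c / (g r)\<^sup>2" if "r \<in> {t0..t1}" for r
    using critical_function_from_energy[OF g_cont g_reg that] dual_energy_pos[OF that] v_nz
    by (simp add: power_divide)
  have "g a \<noteq> 0" using critical_function_from_energy[OF g_cont g_reg a] dual_energy_pos[OF a] v_nz by simp
  then have "((\<lambda>r. ?c / (g r)\<^sup>2) has_real_derivative 0) (at a within {t0..t1})"
    using g_flat by (auto intro!: derivative_eq_intros)
  then show ?thesis
    by (rule has_field_derivative_transform_within[OF _ zero_less_one a]) (simp add: energy)
qed

(* At each s one can choose the normal solution x with A'_s x in the range of A_s, by
   correcting with an element of ker A_s. *)
lemma normal_solution_adjusted:
  assumes s: "s \<in> {t0..t1}"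
  shows "\<exists>x z0. normal_solution s x \<and> DA 1 s *v x = DA 0 s *v z0"
proof -
  obtain x1 where x1: "normal_solution s x1" using normal_solution_exists[OF s] by blast
  let ?U = "range ((*v) (DA 0 s))"
  have "DA 1 s *v x1 \<in> ?U + ?U\<^sup>\<bottom>" using subspace_sum_orthogonal_comp[OF subspace_matrix_range] by auto
  then obtain a b where ab: "a \<in> ?U" "b \<in> ?U\<^sup>\<bottom>" "DA 1 s *v x1 = a + b"
    by (meson set_plus_elim)
  obtain k where k: "DA 0 s *v k = 0" "b = DA 1 s *v k"
    using cokernel_from_kernel[OF s orthogonal_range_in_kernel_transpose[OF ab(2)]] by blast
  obtain z0 where z0: "a = DA 0 s *v z0" using ab(1) by auto
  have "normal_solution s (x1 - k)" using x1 k by (simp add: normal_solution_def matrix_vector_mult_diff_distrib)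
  moreover have "DA 1 s *v (x1 - k) = DA 0 s *v z0"
    using ab(3) k z0 by (simp add: matrix_vector_mult_diff_distrib)
  ultimately show ?thesis by blast
qed

(* Test functions: phi(r) = 2 <v, y r> - |A_r (y r)|^2 along the affine curve
   y r = x + (r - s) z, with the Jacobi-type fields A_r (y r) and their derivatives. *)
definition test_field :: "real \<Rightarrow> real^'n \<Rightarrow> real^'n \<Rightarrow> real \<Rightarrow> real^'n" where
  "test_field s x z r = DA 0 r *v x + (r - s) *\<^sub>R (DA 0 r *v z)"

definition test_field1 :: "real \<Rightarrow> real^'n \<Rightarrow> real^'n \<Rightarrow> real \<Rightarrow> real^'n" where
  "test_field1 s x z r = DA 1 r *v x + (r - s) *\<^sub>R (DA 1 r *v z) + DA 0 r *v z"

definition test_field2 :: "real \<Rightarrow> real^'n \<Rightarrow> real^'n \<Rightarrow> real \<Rightarrow> real^'n" where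
  "test_field2 s x z r = DA 2 r *v x + (r - s) *\<^sub>R (DA 2 r *v z) + 2 *\<^sub>R (DA 1 r *v z)"

definition test_fun :: "real \<Rightarrow> real^'n \<Rightarrow> real^'n \<Rightarrow> real \<Rightarrow> real" where
  "test_fun s x z r = 2 * (v \<bullet> x) + 2 * (r - s) * (v \<bullet> z) - test_field s x z r \<bullet> test_field s x z r"

definition test_fun1 :: "real \<Rightarrow> real^'n \<Rightarrow> real^'n \<Rightarrow> real \<Rightarrow> real" where
  "test_fun1 s x z r = 2 * (v \<bullet> z) - 2 * (test_field s x z r \<bullet> test_field1 s x z r)"

definition test_fun2 :: "real \<Rightarrow> real^'n \<Rightarrow> real^'n \<Rightarrow> real \<Rightarrow> real" where
  "test_fun2 s x z r =
  - 2 * (test_field1 s x z r \<bullet> test_field1 s x z r) - 2 * (test_field s x z r \<bullet> test_field2 s x z r)"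

lemma test_field_deriv:
  assumes r: "t0 < r" "r < t1"
  shows "(test_field s x z has_vector_derivative test_field1 s x z r) (at r)"
proof -
  have "((\<lambda>r. DA 0 r *v x + (r - s) *\<^sub>R (DA 0 r *v z)) has_vector_derivative
      (DA 1 r *v x + ((r - s) *\<^sub>R (DA 1 r *v z) + 1 *\<^sub>R (DA 0 r *v z)))) (at r)"
    by (intro has_vector_derivative_add field_deriv01_interior[OF r] has_vector_derivative_scaleR)
      (auto intro!: derivative_eq_intros)
  then show ?thesis unfolding test_field_def[abs_def] test_field1_def by (simp add: add.assoc)
qed

lemma test_field1_deriv:
  assumes r: "t0 < r" "r < t1"
  shows "(test_field1 s x z has_vector_derivative test_field2 s x z r) (at r)"
proof -
  have "((\<lambda>r. DA 1 r *v x + (r - s) *\<^sub>R (DA 1 r *v z) + DA 0 r *v z) has_vector_derivative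
      (DA 2 r *v x + ((r - s) *\<^sub>R (DA 2 r *v z) + 1 *\<^sub>R (DA 1 r *v z)) + DA 1 r *v z)) (at r)"
    by (intro has_vector_derivative_add field_deriv12_interior[OF r] field_deriv01_interior[OF r] has_vector_derivative_scaleR)
      (auto intro!: derivative_eq_intros)
  then show ?thesis unfolding test_field1_def[abs_def] test_field2_def
    by (simp add: algebra_simps scaleR_2)
qed

lemma test_fun_deriv:
  assumes r: "t0 < r" "r < t1"
  shows "(test_fun s x z has_real_derivative test_fun1 s x z r) (at r)"
proof -
  have "((\<lambda>r. test_field s x z r \<bullet> test_field s x z r) has_real_derivative
      (test_field s x z r \<bullet> test_field1 s x z r + test_field1 s x z r \<bullet> test_field s x z r)) (at r)"
    by (intro has_real_derivative_inner test_field_deriv r)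
  then have "(test_fun s x z has_real_derivative (0 + 2 * (1 * (v \<bullet> z)) -
      (test_field s x z r \<bullet> test_field1 s x z r + test_field1 s x z r \<bullet> test_field s x z r))) (at r)"
    unfolding test_fun_def[abs_def] by (intro derivative_eq_intros) auto
  then show ?thesis by (simp add: test_fun1_def inner_commute)
qed

lemma test_fun1_deriv:
  assumes r: "t0 < r" "r < t1"
  shows "(test_fun1 s x z has_real_derivative test_fun2 s x z r) (at r)"
proof -
  have "((\<lambda>r. test_field s x z r \<bullet> test_field1 s x z r) has_real_derivative
      (test_field s x z r \<bullet> test_field2 s x z r + test_field1 s x z r \<bullet> test_field1 s x z r)) (at r)"
    by (intro has_real_derivative_inner test_field_deriv test_field1_deriv r)
  then have "(test_fun1 s x z has_real_derivative
      (0 - 2 * (test_field s x z r \<bullet> test_field2 s x z r + test_field1 s x z r \<bullet> test_field1 s x z r))) (at r)"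
    unfolding test_fun1_def[abs_def] by (rule DERIV_diff[OF DERIV_const DERIV_cmult])
  moreover have "0 - 2 * (test_field s x z r \<bullet> test_field2 s x z r + test_field1 s x z r \<bullet> test_field1 s x z r)
      = test_fun2 s x z r"
    by (simp add: test_fun2_def algebra_simps)
  ultimately show ?thesis by simp
qed

lemma test_fun2_continuous:
  assumes r: "t0 < r" "r < t1"
  shows "isCont (test_fun2 s x z) r"
proof -
  have "isCont (\<lambda>r. DA k r *v y) r" for k y
    using field_deriv_interior[OF r] has_vector_derivative_continuous by blast
  then have "isCont (test_field2 s x z) r"
    unfolding test_field2_def[abs_def] by (intro continuous_intros)
  moreover have "isCont (test_field s x z) r" "isCont (test_field1 s x z) r"
    using test_field_deriv[OF r] test_field1_deriv[OF r] has_vector_derivative_continuous by blast+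
  ultimately show ?thesis unfolding test_fun2_def[abs_def] by (intro continuous_intros)
qed

lemma test_fun_below:
  assumes r: "r \<in> {t0..t1}"
  shows "test_fun s x z r \<le> dual_energy r"
proof -
  have "DA 0 r *v (x + (r - s) *\<^sub>R z) = test_field s x z r"
    by (simp add: test_field_def matrix_vector_right_distrib matrix_vector_mult_scaleR)
  moreover have "v \<bullet> (x + (r - s) *\<^sub>R z) = v \<bullet> x + (r - s) * (v \<bullet> z)"
    by (simp add: inner_add_right)
  ultimately show ?thesis using dual_energy_ge[OF r, of "x + (r - s) *\<^sub>R z"]
    by (simp add: test_fun_def algebra_simps)
qed

lemma test_fun_touches:
  assumes "s \<in> {t0..t1}" and "normal_solution s x"
  shows "test_fun s x z s = dual_energy s"
  using normal_solution_inner[OF assms(2), of x] dual_energy_eq[OF assms] by (simp add: test_fun_def test_field_def)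

lemma test_fun2_at:
  assumes s: "s \<in> {t0..t1}" and xz: "DA 1 s *v x = DA 0 s *v z0"
  shows "test_fun2 s x ((-2) *\<^sub>R z0) s =
    6 * ((DA 1 s *v x) \<bullet> (DA 1 s *v x)) + 2 * ((DA 0 s *v x) \<bullet> (R s *v (DA 0 s *v x)))"
proof -
  let ?P = "DA 1 s *v x" and ?Y = "DA 0 s *v x"
  have az: "DA 0 s *v ((-2) *\<^sub>R z0) = (-2) *\<^sub>R ?P"
    using xz by (simp only: matrix_vector_mult_scaleR)
  have j1: "test_field1 s x ((-2) *\<^sub>R z0) s = - ?P"
    unfolding test_field1_def az by (simp add: scaleR_2 algebra_simps)
  have a1z: "DA 1 s *v ((-2) *\<^sub>R z0) = (-2) *\<^sub>R (DA 1 s *v z0)"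
    by (simp only: matrix_vector_mult_scaleR)
  have j2: "test_field2 s x ((-2) *\<^sub>R z0) s = - (R s *v ?Y) - 4 *\<^sub>R (DA 1 s *v z0)"
    unfolding test_field2_def a1z jacobi[OF s, of x] by (simp add: algebra_simps)
  have j: "test_field s x ((-2) *\<^sub>R z0) s = ?Y" by (simp add: test_field_def)
  have "?Y \<bullet> (DA 1 s *v z0) = ?P \<bullet> ?P"
    using lagrangian[OF s, of z0 x] xz by (simp add: inner_commute)
  then show ?thesis
    unfolding test_fun2_def j1 j2 j by (simp add: inner_diff_right inner_minus_right algebra_simps)
qed

lemma dual_energy_supported_below: "supported_below t0 t1 dual_energy"
  unfolding supported_below_def
proof (intro allI impI)
  fix s assume s': "t0 < s \<and> s < t1"
  then have s: "s \<in> {t0..t1}" by auto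
  obtain x z0 where x: "normal_solution s x" and xz: "DA 1 s *v x = DA 0 s *v z0"
    using normal_solution_adjusted[OF s] by blast
  let ?z = "(-2) *\<^sub>R z0"
  have curv: "test_fun2 s x ?z s \<ge> 0"
    using test_fun2_at[OF s xz] R_nonneg[OF s, of "DA 0 s *v x"] by simp
  show "\<exists>c. \<forall>\<epsilon>>0. \<exists>\<delta>>0. \<forall>r. t0 \<le> r \<and> r \<le> t1 \<and> \<bar>r - s\<bar> < \<delta> \<longrightarrow>
      dual_energy s + c * (r - s) - \<epsilon> * (r - s)\<^sup>2 \<le> dual_energy r"
  proof (rule exI[of _ "test_fun1 s x ?z s"], intro allI impI)
    fix \<epsilon> :: real assume \<epsilon>: "\<epsilon> > 0"
    obtain \<delta> where \<delta>: "\<delta> > 0" and taylor: "\<And>r. \<bar>r - s\<bar> < \<delta> \<Longrightarrow>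
        test_fun s x ?z s + test_fun1 s x ?z s * (r - s) + (test_fun2 s x ?z s / 2 - \<epsilon>) * (r - s)^2
        \<le> test_fun s x ?z r"
      using taylor_lower_bound[of t0 s t1 "test_fun s x ?z" "test_fun1 s x ?z" "test_fun2 s x ?z",
          OF _ _ test_fun_deriv test_fun1_deriv test_fun2_continuous \<epsilon>] s' by blast
    show "\<exists>\<delta>>0. \<forall>r. t0 \<le> r \<and> r \<le> t1 \<and> \<bar>r - s\<bar> < \<delta> \<longrightarrow>
        dual_energy s + test_fun1 s x ?z s * (r - s) - \<epsilon> * (r - s)\<^sup>2 \<le> dual_energy r"
    proof (intro exI conjI allI impI)
      show "\<delta> > 0" by (rule \<delta>)
    next
      fix r assume r: "t0 \<le> r \<and> r \<le> t1 \<and> \<bar>r - s\<bar> < \<delta>"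
      have "(test_fun2 s x ?z s / 2) * (r - s)^2 \<ge> 0" using curv by simp
      then have "dual_energy s + test_fun1 s x ?z s * (r - s) - \<epsilon> * (r - s)\<^sup>2 \<le> test_fun s x ?z r"
        using taylor[of r] r test_fun_touches[OF s x, of ?z] by (simp add: algebra_simps)
      also have "\<dots> \<le> dual_energy r" using test_fun_below[of r] r by simp
      finally show "dual_energy s + test_fun1 s x ?z s * (r - s) - \<epsilon> * (r - s)\<^sup>2 \<le> dual_energy r" .
    qed
  qed
qed

lemma dual_energy_constant:
  assumes g_cont: "continuous_on {t0..t1} g"
    and g_reg: "\<And>t. t \<in> {t0..t1} \<Longrightarrow> invertible (DA 0 t) \<Longrightarrow> g t = (norm v)\<^sup>2 / norm (inv_adj (DA 0 t) *v v)"
    and g0: "(g has_real_derivative 0) (at t0 within {t0..t1})"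
    and g1: "(g has_real_derivative 0) (at t1 within {t0..t1})"
    and r: "r \<in> {t0..t1}"
  shows "dual_energy r = dual_energy t0"
  using convex_flat_endpoints_const[OF t01 supported_below_convex[OF dual_energy_continuous dual_energy_supported_below]
      dual_energy_flat[OF g_cont g_reg g0] dual_energy_flat[OF g_cont g_reg g1] r] t01 by simp

(* If h is constant, the test function at an interior s has a local maximum at s, so its
   second derivative is <= 0; hence A'_s x = 0 and R_s A_s x = 0 for a normal solution x. *)
lemma constant_energy_parallel_point:
  assumes const: "\<And>r. r \<in> {t0..t1} \<Longrightarrow> dual_energy r = c" and s': "t0 < s" "s < t1"
  shows "\<exists>x. normal_solution s x \<and> DA 1 s *v x = 0 \<and> R s *v (DA 0 s *v x) = 0"
proof -
  have s: "s \<in> {t0..t1}" using s' by auto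
  obtain x z0 where x: "normal_solution s x" and xz: "DA 1 s *v x = DA 0 s *v z0"
    using normal_solution_adjusted[OF s] by blast
  let ?z = "(-2) *\<^sub>R z0"
  let ?f = "test_fun s x ?z"
  define d where "d = min (s - t0) (t1 - s)"
  have d: "d > 0" using s' by (simp add: d_def)
  have local_max: "?f r \<le> ?f s" if "\<bar>s - r\<bar> < d" for r
  proof -
    have r: "r \<in> {t0..t1}" using that by (auto simp: d_def abs_less_iff)
    show ?thesis using test_fun_below[OF r] const[OF r] const[OF s] test_fun_touches[OF s x] by simp
  qed
  have slope: "test_fun1 s x ?z s = 0"
    by (rule DERIV_local_max[OF test_fun_deriv[OF s'] d]) (use local_max in auto)
  have "test_fun2 s x ?z s \<le> 0"
  proof (rule ccontr)
    assume "\<not> ?thesis"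
    then have pos: "test_fun2 s x ?z s > 0" by simp
    define \<epsilon> where "\<epsilon> = test_fun2 s x ?z s / 4"
    have \<epsilon>: "\<epsilon> > 0" using pos by (simp add: \<epsilon>_def)
    obtain \<delta> where \<delta>: "\<delta> > 0" and taylor: "\<And>r. \<bar>r - s\<bar> < \<delta> \<Longrightarrow>
        ?f s + test_fun1 s x ?z s * (r - s) + (test_fun2 s x ?z s / 2 - \<epsilon>) * (r - s)^2 \<le> ?f r"
      using taylor_lower_bound[of t0 s t1 ?f "test_fun1 s x ?z" "test_fun2 s x ?z",
          OF _ _ test_fun_deriv test_fun1_deriv test_fun2_continuous \<epsilon>] s' by blast
    define r where "r = s + min (\<delta>/2) (d/2)"
    have rs: "\<bar>r - s\<bar> < \<delta>" "\<bar>s - r\<bar> < d" "r \<noteq> s" using \<delta> d by (auto simp: r_def min_def)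
    have "(test_fun2 s x ?z s / 2 - \<epsilon>) * (r - s)^2 > 0" using pos rs(3) by (simp add: \<epsilon>_def)
    then have "?f s < ?f r" using taylor[OF rs(1)] slope by simp
    with local_max[OF rs(2)] show False by simp
  qed
  then have "(DA 1 s *v x) \<bullet> (DA 1 s *v x) = 0" "(DA 0 s *v x) \<bullet> (R s *v (DA 0 s *v x)) = 0"
    using test_fun2_at[OF s xz] R_nonneg[OF s, of "DA 0 s *v x"] inner_ge_zero[of "DA 1 s *v x"] by linarith+
  then show ?thesis using psd_quadratic_form_zero[OF R_sym[OF s] R_nonneg[OF s]] x by auto
qed

(* For a fixed w, the defect energy |A^T A w - v|^2 + |A' w|^2 measures how far w is from
   being a parallel normal solution. *)
definition normal_defect :: "real^'n \<Rightarrow> real \<Rightarrow> real^'n" where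
  "normal_defect w r = transpose (DA 0 r) *v (DA 0 r *v w) - v"

definition defect_energy :: "real^'n \<Rightarrow> real \<Rightarrow> real" where
  "defect_energy w r = normal_defect w r \<bullet> normal_defect w r + (DA 1 r *v w) \<bullet> (DA 1 r *v w)"

(* Its derivative, simplified by the Lagrange symmetry. *)
lemma normal_defect_deriv:
  assumes r: "t0 < r" "r < t1"
  shows "(normal_defect w has_vector_derivative 2 *\<^sub>R (transpose (DA 0 r) *v (DA 1 r *v w))) (at r)"
proof -
  have rI: "r \<in> {t0..t1}" using r by simp
  have "(DA 0 has_vector_derivative DA 1 r) (at r)"
    using tensor_deriv[OF rI, of 0] at_within_interior[of r "{t0..t1}"] r by simp
  then have "((\<lambda>r. transpose (DA 0 r)) has_vector_derivative transpose (DA 1 r)) (at r)"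
    by (rule bounded_linear.has_vector_derivative[OF bounded_linear_transpose])
  from bounded_bilinear.has_vector_derivative[OF bounded_bilinear_mv this field_deriv01_interior[OF r, of w]]
  have "((\<lambda>r. transpose (DA 0 r) *v (DA 0 r *v w)) has_vector_derivative
      2 *\<^sub>R (transpose (DA 0 r) *v (DA 1 r *v w))) (at r)"
    using lagrangian_transpose[OF rI, of w] by (simp add: scaleR_2)
  then show ?thesis
    unfolding normal_defect_def[abs_def] using has_vector_derivative_diff[OF _ has_vector_derivative_const] by fastforce
qed

lemma defect_energy_deriv:
  assumes r: "t0 < r" "r < t1"
  shows "(defect_energy w has_real_derivative
    4 * (normal_defect w r \<bullet> (transpose (DA 0 r) *v (DA 1 r *v w))) + 2 * ((DA 1 r *v w) \<bullet> (DA 2 r *v w))) (at r)"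
proof -
  have "(defect_energy w has_real_derivative
      (normal_defect w r \<bullet> (2 *\<^sub>R (transpose (DA 0 r) *v (DA 1 r *v w))) +
       (2 *\<^sub>R (transpose (DA 0 r) *v (DA 1 r *v w))) \<bullet> normal_defect w r) +
      ((DA 1 r *v w) \<bullet> (DA 2 r *v w) + (DA 2 r *v w) \<bullet> (DA 1 r *v w))) (at r)"
    unfolding defect_energy_def[abs_def]
    by (intro DERIV_add has_real_derivative_inner normal_defect_deriv field_deriv12_interior r)
  then show ?thesis by (simp add: inner_commute)
qed

(* The deviation of w from a normal solution x with A'_r x = 0 is controlled by the defect
   energy of w, through the coercive bound on Jacobi energies. *)
lemma defect_controls_deviation:
  assumes r: "r \<in> {t0..t1}" and x: "normal_solution r x" "DA 1 r *v x = 0"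
    and c: "c > 0" "\<And>k. c * (k \<bullet> k) \<le> kernel_energy k r"
  shows "(norm (w - x))^2 \<le> (4 / c^2 + 2 / c) * defect_energy w r"
proof -
  define k where "k = w - x"
  let ?a = "norm (normal_defect w r)" and ?b = "norm (DA 1 r *v w)"
  have Qk: "normal_defect w r = transpose (DA 0 r) *v (DA 0 r *v k)"
    using x(1) by (simp add: normal_defect_def k_def normal_solution_def matrix_vector_mult_diff_distrib)
  have Pk: "DA 1 r *v w = DA 1 r *v k" using x(2) by (simp add: k_def matrix_vector_mult_diff_distrib)
  have "(DA 0 r *v k) \<bullet> (DA 0 r *v k) = k \<bullet> normal_defect w r" by (simp add: Qk mv_transpose_inner)
  also have "\<dots> \<le> norm k * ?a" by (rule order_trans[OF abs_ge_self Cauchy_Schwarz_ineq2])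
  finally have Ak: "(DA 0 r *v k) \<bullet> (DA 0 r *v k) \<le> norm k * ?a" .
  have "c * (norm k)^2 \<le> (DA 0 r *v k) \<bullet> (DA 0 r *v k) + ?b^2"
    using c(2)[of k] unfolding kernel_energy_def Pk by (simp add: power2_norm_eq_inner)
  then have "c * (norm k)^2 \<le> norm k * ?a + ?b^2" using Ak by linarith
  from quadratic_absorb[OF c(1) norm_ge_zero norm_ge_zero norm_ge_zero this]
  show ?thesis by (simp add: k_def defect_energy_def power2_norm_eq_inner)
qed

(* Comparing with the good normal solution at each interior r, the derivative of the defect
   energy is bounded by a constant multiple of the energy. *)
lemma defect_energy_growth:
  assumes good: "\<And>s. t0 < s \<Longrightarrow> s < t1 \<Longrightarrow> \<exists>x. normal_solution s x \<and> DA 1 s *v x = 0 \<and> R s *v (DA 0 s *v x) = 0"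
  shows "\<exists>C. \<forall>r. t0 < r \<and> r < t1 \<longrightarrow>
    \<bar>4 * (normal_defect w r \<bullet> (transpose (DA 0 r) *v (DA 1 r *v w))) + 2 * ((DA 1 r *v w) \<bullet> (DA 2 r *v w))\<bar>
      \<le> C * defect_energy w r"
proof -
  have cT: "continuous_on {t0..t1} (\<lambda>r. transpose (DA 0 r))"
    by (rule bounded_linear.continuous_on[OF bounded_linear_transpose tensor_continuous])
  obtain BT where BT: "BT \<ge> 0" "\<And>t y. t \<in> {t0..t1} \<Longrightarrow> norm (transpose (DA 0 t) *v y) \<le> BT * norm y"
    using continuous_matrix_bound[OF cT compact_Icc] by blast
  obtain BA where BA: "BA \<ge> 0" "\<And>t y. t \<in> {t0..t1} \<Longrightarrow> norm (DA 0 t *v y) \<le> BA * norm y"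
    using continuous_matrix_bound[OF tensor_continuous compact_Icc] by blast
  obtain BR where BR: "BR \<ge> 0" "\<And>t y. t \<in> {t0..t1} \<Longrightarrow> norm (R t *v y) \<le> BR * norm y"
    using continuous_matrix_bound[OF R_cont compact_Icc] by blast
  obtain c where c: "c > 0" "\<And>r k. r \<in> {t0..t1} \<Longrightarrow> c * (k \<bullet> k) \<le> kernel_energy k r"
    using coercive_bound by blast
  define K where "K = BR * BA"
  define D where "D = 4 / c^2 + 2 / c"
  have K: "K \<ge> 0" using BR BA by (simp add: K_def)
  have "\<bar>4 * (normal_defect w r \<bullet> (transpose (DA 0 r) *v (DA 1 r *v w))) + 2 * ((DA 1 r *v w) \<bullet> (DA 2 r *v w))\<bar>
      \<le> (2 * BT + K * (1 + D)) * defect_energy w r" if r: "t0 < r" "r < t1" for r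
  proof -
    have rI: "r \<in> {t0..t1}" using r by simp
    obtain x where x: "normal_solution r x" "DA 1 r *v x = 0" "R r *v (DA 0 r *v x) = 0"
      using good[OF r] by blast
    let ?Q = "normal_defect w r" and ?P = "DA 1 r *v w"
    let ?a = "norm ?Q" and ?b = "norm ?P" and ?m = "norm (w - x)"
    have energy: "defect_energy w r = ?a^2 + ?b^2" by (simp add: defect_energy_def power2_norm_eq_inner)
    have m2: "?m^2 \<le> D * defect_energy w r"
      unfolding D_def using defect_controls_deviation[OF rI x(1,2) c(1) c(2)[OF rI]] .
    have "DA 2 r *v w = - (R r *v (DA 0 r *v (w - x)))"
      using jacobi[OF rI, of w] x(3) by (simp add: matrix_vector_mult_diff_distrib)
    then have "norm (DA 2 r *v w) \<le> BR * norm (DA 0 r *v (w - x))" using BR(2)[OF rI] by simp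
    also have "\<dots> \<le> K * ?m" using BA(2)[OF rI, of "w - x"] BR(1) by (simp add: K_def mult_left_mono mult.assoc)
    finally have "?b * norm (DA 2 r *v w) \<le> ?b * (K * ?m)" by (simp add: mult_left_mono)
    then have "\<bar>2 * (?P \<bullet> (DA 2 r *v w))\<bar> \<le> 2 * (?b * (K * ?m))"
      using Cauchy_Schwarz_ineq2[of ?P "DA 2 r *v w"] by linarith
    also have "\<dots> = K * (2 * ?b * ?m)" by (simp add: algebra_simps)
    also have "\<dots> \<le> K * (?b^2 + ?m^2)" by (rule mult_left_mono[OF sum_squares_bound K])
    also have "\<dots> \<le> K * (defect_energy w r + D * defect_energy w r)"
      using m2 energy zero_le_power2[of ?a] by (intro mult_left_mono K) linarith
    finally have t2: "\<bar>2 * (?P \<bullet> (DA 2 r *v w))\<bar> \<le> K * (defect_energy w r + D * defect_energy w r)" .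
    have "?a * norm (transpose (DA 0 r) *v ?P) \<le> ?a * (BT * ?b)"
      using BT(2)[OF rI, of ?P] by (simp add: mult_left_mono)
    then have "\<bar>4 * (?Q \<bullet> (transpose (DA 0 r) *v ?P))\<bar> \<le> 4 * (?a * (BT * ?b))"
      using Cauchy_Schwarz_ineq2[of ?Q "transpose (DA 0 r) *v ?P"] by linarith
    also have "\<dots> = (2 * BT) * (2 * ?a * ?b)" by (simp add: algebra_simps)
    also have "\<dots> \<le> (2 * BT) * (?a^2 + ?b^2)" using BT(1) by (intro mult_left_mono sum_squares_bound) simp
    finally have t1: "\<bar>4 * (?Q \<bullet> (transpose (DA 0 r) *v ?P))\<bar> \<le> 2 * BT * defect_energy w r"
      by (simp only: energy mult.assoc)
    have "(2 * BT + K * (1 + D)) * defect_energy w r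
        = 2 * BT * defect_energy w r + K * (defect_energy w r + D * defect_energy w r)"
      by (simp add: algebra_simps)
    then show ?thesis using t1 t2 abs_triangle_ineq by (smt (verit))
  qed
  then show ?thesis by blast
qed

(* Gronwall from an interior good point: one w is a normal solution with A' w = 0 everywhere. *)
lemma parallel_normal_solution:
  assumes good: "\<And>s. t0 < s \<Longrightarrow> s < t1 \<Longrightarrow> \<exists>x. normal_solution s x \<and> DA 1 s *v x = 0 \<and> R s *v (DA 0 s *v x) = 0"
  shows "\<exists>w. \<forall>r\<in>{t0..t1}. normal_solution r w \<and> DA 1 r *v w = 0"
proof -
  define tm where "tm = (t0 + t1) / 2"
  have tm: "t0 < tm" "tm < t1" using t01 by (auto simp: tm_def)
  obtain w where w: "normal_solution tm w" "DA 1 tm *v w = 0" using good[OF tm] by blast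
  obtain C where C: "\<And>r. t0 < r \<Longrightarrow> r < t1 \<Longrightarrow>
      \<bar>4 * (normal_defect w r \<bullet> (transpose (DA 0 r) *v (DA 1 r *v w))) + 2 * ((DA 1 r *v w) \<bullet> (DA 2 r *v w))\<bar>
      \<le> C * defect_energy w r"
    using defect_energy_growth[OF good] by blast
  have cont: "continuous_on {t0..t1} (defect_energy w)"
    unfolding defect_energy_def[abs_def] normal_defect_def
    by (intro continuous_intros field_continuous
        bounded_bilinear.continuous_on[OF bounded_bilinear_mv
          bounded_linear.continuous_on[OF bounded_linear_transpose tensor_continuous]])
  have nonneg: "0 \<le> defect_energy w r" for r by (simp add: defect_energy_def)
  have start: "defect_energy w tm = 0"
    using w by (simp add: defect_energy_def normal_defect_def normal_solution_def)
  have "defect_energy w r = 0" if "r \<in> {t0..t1}" for r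
    using gronwall_vanishing[OF cont defect_energy_deriv C nonneg _ _ start] tm that by simp
  then have "normal_solution r w \<and> DA 1 r *v w = 0" if "r \<in> {t0..t1}" for r
    using that by (simp add: defect_energy_def normal_defect_def normal_solution_def add_nonneg_eq_0_iff)
  then show ?thesis by blast
qed

lemma parallel_solution_conclusions:
  assumes w: "\<And>r. r \<in> {t0..t1} \<Longrightarrow> normal_solution r w \<and> DA 1 r *v w = 0"
  shows "(\<forall>t\<in>{t0..t1}. invertible (DA 0 t) \<longrightarrow> matrix_inv (DA 0 t) *v (inv_adj (DA 0 t) *v v) = w) \<and>
      (\<forall>t\<in>{t0..t1}. DA 1 t *v w = 0) \<and>
      (\<forall>t\<in>{t0..t1}. invertible (DA 0 t) \<longrightarrow> inv_adj (DA 0 t) *v v = DA 0 t *v w) \<and>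
      (\<forall>t\<in>{t0..t1}. ((\<lambda>s. DA 0 s *v w) has_vector_derivative 0) (at t within {t0..t1})) \<and>
      (\<forall>t\<in>{t0..t1}. DA 2 t *v w + R t *v (DA 0 t *v w) = 0)"
proof -
  have Aw: "inv_adj (DA 0 t) *v v = DA 0 t *v w" if t: "t \<in> {t0..t1}" "invertible (DA 0 t)" for t
  proof -
    have "transpose (DA 0 t) *v (DA 0 t *v w) = transpose (DA 0 t) *v (inv_adj (DA 0 t) *v v)"
      using w[OF t(1)] regular_normal_solution(1,2)[OF t] by (simp add: normal_solution_def)
    then show ?thesis
      by (rule injD[OF inj_matrix_vector_mult[OF transpose_invertible[OF t(2)]], symmetric])
  qed
  moreover have "matrix_inv (DA 0 t) *v (inv_adj (DA 0 t) *v v) = w"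
    if "t \<in> {t0..t1}" "invertible (DA 0 t)" for t
    using Aw[OF that] matrix_inv_apply(2)[OF that(2)] by simp
  moreover have "((\<lambda>s. DA 0 s *v w) has_vector_derivative 0) (at t within {t0..t1})" if "t \<in> {t0..t1}" for t
    using field_deriv01[OF that, of w] w[OF that] by simp
  ultimately show ?thesis using w jacobi by auto
qed

end

theorem proposition3p1:
  fixes t0 t1 :: real and R :: "real \<Rightarrow> real^'n^'n" and DA :: "nat \<Rightarrow> real \<Rightarrow> real^'n^'n"
    and v :: "real^'n"
  assumes t01: "t0 < t1"
    and R_smooth: "smooth_on_real {t0..t1} R"
    and R_sym: "\<forall>t\<in>{t0..t1}. transpose (R t) = R t"
    and R_nonneg: "\<forall>t\<in>{t0..t1}. \<forall>x. 0 \<le> x \<bullet> (R t *v x)"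
    and lag: "lagrange_tensor t0 t1 R DA"
    and v_nz: "v \<noteq> 0"
    and v_perp: "\<forall>t\<in>{t0..t1}. \<forall>x. DA 0 t *v x = 0 \<longrightarrow> v \<bullet> x = 0"
    and g_crit: "\<exists>g :: real \<Rightarrow> real.
        continuous_on {t0..t1} g \<and>
        (\<forall>t\<in>{t0..t1}. invertible (DA 0 t) \<longrightarrow>
            g t = (norm v)\<^sup>2 / norm (inv_adj (DA 0 t) *v v)) \<and>
        (g has_real_derivative 0) (at t0 within {t0..t1}) \<and>
        (g has_real_derivative 0) (at t1 within {t0..t1})"
  shows "\<exists>w :: real^'n.
      (\<forall>t\<in>{t0..t1}. invertible (DA 0 t) \<longrightarrow>
          matrix_inv (DA 0 t) *v (inv_adj (DA 0 t) *v v) = w) \<and>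
      (\<forall>t\<in>{t0..t1}. DA 1 t *v w = 0) \<and>
      (\<forall>t\<in>{t0..t1}. invertible (DA 0 t) \<longrightarrow> inv_adj (DA 0 t) *v v = DA 0 t *v w) \<and>
      (\<forall>t\<in>{t0..t1}. ((\<lambda>s. DA 0 s *v w) has_vector_derivative 0) (at t within {t0..t1})) \<and>
      (\<forall>t\<in>{t0..t1}. DA 2 t *v w + R t *v (DA 0 t *v w) = 0)"
proof -
  obtain g where g_cont: "continuous_on {t0..t1} g"
    and g_reg: "\<And>t. t \<in> {t0..t1} \<Longrightarrow> invertible (DA 0 t) \<Longrightarrow> g t = (norm v)\<^sup>2 / norm (inv_adj (DA 0 t) *v v)"
    and g0: "(g has_real_derivative 0) (at t0 within {t0..t1})"
    and g1: "(g has_real_derivative 0) (at t1 within {t0..t1})"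
    using g_crit by blast
  interpret lagrange_vector_setting t0 t1 R DA v
    by unfold_locales (use t01 smooth_on_real_continuous[OF R_smooth] R_sym R_nonneg lag v_nz v_perp in auto)
  have "\<And>r. r \<in> {t0..t1} \<Longrightarrow> dual_energy r = dual_energy t0"
    by (rule dual_energy_constant[OF g_cont g_reg g0 g1])
  then have "\<exists>w. \<forall>r\<in>{t0..t1}. normal_solution r w \<and> DA 1 r *v w = 0"
    by (rule parallel_normal_solution[OF constant_energy_parallel_point])
  then obtain w where "\<And>r. r \<in> {t0..t1} \<Longrightarrow> normal_solution r w \<and> DA 1 r *v w = 0"
    by blast
  then show ?thesis by (intro exI[of _ w] parallel_solution_conclusions)
qed

end
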